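(* Let $\Omega_D>0$, $K>1$, $\Omega_A=K\Omega_D$, $\overline{r}_K:=K/(K+1)$, and suppose $1/2<1-\beta$ and $1-\beta\ne\overline{r}_K$. Let $\rho^b$ be the solution on $[0,1]$ of $\rho'=\frac{(K+1)\Omega_D(\rho-\overline{r}_K)}{2(\rho-1/2)}$ with $\rho(1)=1-\beta$, and set $y_b:=1-\rho^b(0)$. Suppose $\alpha>y_b$ and $\alpha\ne1-y_b$. Define $\hat\rho(0)=\alpha$ and $\hat\rho(x)=\rho^b(x)$ for $0<x\le1$. Then there is $\epsilon_1>0$ such that for every $\epsilon\in(0,\epsilon_1)$ problem (S$_\epsilon$) has a weak solution $\rho^\epsilon\in W^{1,2}(0,1)$, and $\lim_{\epsilon\to0}\rho^\epsilon=\hat\rho$ on $[0,1]$.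
   Context: Problem (S$_\epsilon$): $\tfrac{\epsilon}{2}\rho''+(2\rho-1)\rho'+\Omega_A(1-\rho)-\Omega_D\rho=0$ on $(0,1)$, $\rho(0)=\alpha$, $\rho(1)=1-\beta$. A weak solution is $\rho\in W^{1,2}(0,1)$ with these boundary values and $\int_0^1\big[\tfrac{\epsilon}{2}\rho'\varphi'-\big((2\rho-1)\rho'+\Omega_A(1-\rho)-\Omega_D\rho\big)\varphi\big]dx=0$ for all $\varphi\in W^{1,2}_0(0,1)$. (Under the hypotheses, $\rho^b$ exists on $[0,1]$ and stays strictly on the same side of $\overline{r}_K$ as $1-\beta$, with $\rho^b>1/2$.) For $\rho,\hat\rho$ on $[0,1]$ and $\Delta>0$: $\rho\in O(\hat\rho,\Delta)$ iff $\inf_{y\in[0,1],|y-x|\le\Delta}\hat\rho(y)-\Delta<\rho(x)<\sup_{y\in[0,1],|y-x|\le\Delta}\hat\rho(y)+\Delta$ for all $x\in[0,1]$; $\lim_{\epsilon\to0}\rho^\epsilon=\hat\rho$ means for every $\Delta>0$ there is $\epsilon_0>0$ with $\rho^\epsilon\in O(\hat\rho,\Delta)$ for all $\epsilon\in(0,\epsilon_0)$. *)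

theory Defs
  imports "HOL-Analysis.Analysis"
begin

text \<open>W^{1,2}(0,1) via the (absolutely) continuous representative:
  rho is in W^{1,2}(0,1) with weak derivative g iff g is square integrable on [0,1]
  and rho x = rho 0 + integral of g over [0,x] for all x in [0,1].\<close>
definition W12 :: "(real \<Rightarrow> real) \<Rightarrow> (real \<Rightarrow> real) \<Rightarrow> bool" where
  "W12 rho g \<longleftrightarrow>
     set_borel_measurable lborel {0..1} g \<and>
     set_integrable lborel {0..1} (\<lambda>t. (g t)^2) \<and>
     (\<forall>x\<in>{0..1}. rho x = rho 0 + (LINT t:{0..x}|lborel. g t))"

definition weak_sol ::
  "real \<Rightarrow> real \<Rightarrow> real \<Rightarrow> real \<Rightarrow> real \<Rightarrow> (real \<Rightarrow> real) \<Rightarrow> bool" where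
  "weak_sol eps OmA OmD alpha beta rho \<longleftrightarrow>
     (\<exists>g. W12 rho g \<and> rho 0 = alpha \<and> rho 1 = 1 - beta \<and>
        (\<forall>phi dphi. W12 phi dphi \<and> phi 0 = 0 \<and> phi 1 = 0 \<longrightarrow>
           (LINT x:{0..1}|lborel.
              eps / 2 * g x * dphi x
              - ((2 * rho x - 1) * g x + OmA * (1 - rho x) - OmD * rho x) * phi x) = 0))"

definition nbhd :: "(real \<Rightarrow> real) \<Rightarrow> real \<Rightarrow> (real \<Rightarrow> real) set" where
  "nbhd rhohat Delta = {rho. \<forall>x\<in>{0..1}.
      Inf (rhohat ` ({0..1} \<inter> {x - Delta..x + Delta})) - Delta < rho x \<and>
      rho x < Sup (rhohat ` ({0..1} \<inter> {x - Delta..x + Delta})) + Delta}"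

definition eps_lim :: "(real \<Rightarrow> real \<Rightarrow> real) \<Rightarrow> (real \<Rightarrow> real) \<Rightarrow> bool" where
  "eps_lim rhos rhohat \<longleftrightarrow>
     (\<forall>Delta>0. \<exists>eps0>0. \<forall>eps. 0 < eps \<and> eps < eps0 \<longrightarrow> rhos eps \<in> nbhd rhohat Delta)"

end

theory Submission
  imports Defs
begin

text \<open>Writing \<open>V = \<epsilon>/2 \<rho>' + \<rho>\<^sup>2 - \<rho>\<close>, problem (S\<open>\<^sub>\<epsilon>\<close>) becomes a first order system for
  \<open>(\<rho>, V)\<close>, and \<open>\<epsilon> = 0\<close> gives the outer solution \<open>\<rho>\<^sup>b\<close> with \<open>V = (\<rho>\<^sup>b)\<^sup>2 - \<rho>\<^sup>b\<close>. The
  system is cooperative, so strict sub- and super-solutions stay ordered with every solution. We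
  shoot from \<open>\<rho>(0) = \<alpha>\<close> with free \<open>V(0)\<close>: barriers made of \<open>\<rho>\<^sup>b\<close>, a slowly varying
  correction and a boundary layer \<open>l exp(-\<kappa> x / \<epsilon>)\<close> show that \<open>\<rho>(1)\<close> lies below (above)
  \<open>1 - \<beta>\<close> when \<open>V(0)\<close> is slightly below (above) its outer value, so some \<open>V(0)\<close> hits
  \<open>\<rho>(1) = 1 - \<beta>\<close>, and for it the same barriers squeeze \<open>\<rho>\<close> onto \<open>\<rho>\<^sup>b\<close> outside a layer of
  width \<open>O(\<epsilon>)\<close> at \<open>x = 0\<close>. The layer below \<open>\<rho>\<^sup>b(0)\<close> exists because \<open>\<alpha> > 1 - \<rho>\<^sup>b(0)\<close>.
  A classical solution of the system is a weak solution by integration by parts.\<close>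

section \<open>Picard iteration for globally Lipschitz vector fields\<close>

lemma has_integral_mult_power_Icc:
  assumes "0 \<le> t"
  shows "((\<lambda>s::real. C * s ^ k) has_integral C * (t ^ Suc k / Suc k)) {0..t}"
proof -
  have "((\<lambda>s::real. s ^ k) has_integral ((\<lambda>s. s ^ Suc k / Suc k) t - (\<lambda>s. s ^ Suc k / Suc k) 0)) {0..t}"
  proof (rule fundamental_theorem_of_calculus[OF assms])
    fix s assume "s \<in> {0..t}"
    have "((\<lambda>s::real. s ^ Suc k / Suc k) has_real_derivative real (Suc k) * s ^ k / Suc k) (at s)"
      using DERIV_cdivide[OF DERIV_pow[of "Suc k" s], of "Suc k"] by simp
    then have "((\<lambda>s::real. s ^ Suc k / Suc k) has_real_derivative s ^ k) (at s)"
      by (simp del: of_nat_Suc)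
    then show "((\<lambda>s. s ^ Suc k / Suc k) has_vector_derivative s ^ k) (at s within {0..t})"
      by (simp add: has_real_derivative_iff_has_vector_derivative[symmetric] has_field_derivative_at_within)
  qed
  then show ?thesis by (intro has_integral_mult_right) simp
qed

lemma has_integral_exp_Icc:
  assumes "0 \<le> t"
  shows "((\<lambda>s::real. L * exp (L * s)) has_integral (exp (L * t) - 1)) {0..t}"
proof -
  have "((\<lambda>s::real. L * exp (L * s)) has_integral ((\<lambda>s. exp (L * s)) t - (\<lambda>s. exp (L * s)) 0)) {0..t}"
  proof (rule fundamental_theorem_of_calculus[OF assms])
    fix s assume "s \<in> {0..t}"
    have "((\<lambda>s::real. exp (L * s)) has_real_derivative L * exp (L * s)) (at s)"
      by (auto intro!: derivative_eq_intros)
    then show "((\<lambda>s. exp (L * s)) has_vector_derivative L * exp (L * s)) (at s within {0..t})"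
      by (simp add: has_real_derivative_iff_has_vector_derivative[symmetric] has_field_derivative_at_within)
  qed
  then show ?thesis by simp
qed

fun picard_iter :: "('a::banach \<Rightarrow> 'a) \<Rightarrow> 'a \<Rightarrow> nat \<Rightarrow> real \<Rightarrow> 'a" where
  "picard_iter F y0 0 = (\<lambda>t. y0)"
| "picard_iter F y0 (Suc n) = (\<lambda>t. y0 + integral {0..t} (\<lambda>s. F (picard_iter F y0 n s)))"

definition picard_sol :: "('a::banach \<Rightarrow> 'a) \<Rightarrow> 'a \<Rightarrow> real \<Rightarrow> 'a" where
  "picard_sol F y0 t = lim (\<lambda>n. picard_iter F y0 n t)"

locale lipschitz_field =
  fixes F :: "'a::banach \<Rightarrow> 'a" and L :: real
  assumes lipschitz: "L-lipschitz_on UNIV F"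
begin

lemma field_dist_le: "norm (F y - F z) \<le> L * norm (y - z)"
  using lipschitz_on_normD[OF lipschitz] by simp

lemma L_nonneg: "0 \<le> L"
  using lipschitz_on_nonneg[OF lipschitz] .

lemma continuous_on_field: "continuous_on S F"
  using lipschitz_on_continuous_on[OF lipschitz] continuous_on_subset by blast

lemma continuous_on_picard_iter: "continuous_on {0..1} (picard_iter F y0 n)"
proof (induction n)
  case (Suc n)
  have "continuous_on {0..1} (\<lambda>s. F (picard_iter F y0 n s))"
    using continuous_on_compose2[OF continuous_on_field Suc] by auto
  then have "continuous_on {0..1} (\<lambda>t. integral {0..t} (\<lambda>s. F (picard_iter F y0 n s)))"
    by (intro indefinite_integral_continuous_1 integrable_continuous_real)
  then show ?case by (auto intro!: continuous_intros)
qed simp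

lemma integrable_field_picard_iter:
  assumes "t \<in> {0..1}"
  shows "(\<lambda>s. F (picard_iter F y0 n s)) integrable_on {0..t}"
proof (rule integrable_continuous_real)
  have "continuous_on {0..1} (\<lambda>s. F (picard_iter F y0 n s))"
    using continuous_on_compose2[OF continuous_on_field continuous_on_picard_iter] by auto
  then show "continuous_on {0..t} (\<lambda>s. F (picard_iter F y0 n s))"
    by (rule continuous_on_subset) (use assms in auto)
qed

lemma picard_iter_Suc_diff:
  assumes "t \<in> {0..1}"
  shows "picard_iter F v (Suc n) t - picard_iter F w (Suc m) t
    = (v - w) + integral {0..t} (\<lambda>s. F (picard_iter F v n s) - F (picard_iter F w m s))"
  using integral_diff[OF integrable_field_picard_iter[OF assms, of v n]
      integrable_field_picard_iter[OF assms, of w m]]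
  by simp

lemma picard_iter_step_le:
  assumes "t \<in> {0..1}"
  shows "norm (picard_iter F y0 (Suc n) t - picard_iter F y0 n t)
    \<le> norm (F y0) * L ^ n * (t ^ Suc n / fact (Suc n))"
  using assms
proof (induction n arbitrary: t)
  case (Suc n)
  let ?C = "L * (norm (F y0) * L ^ n / fact (Suc n))"
  have hi: "((\<lambda>s::real. ?C * s ^ Suc n) has_integral ?C * (t ^ Suc (Suc n) / Suc (Suc n))) {0..t}"
    using Suc.prems by (intro has_integral_mult_power_Icc) auto
  have "norm (picard_iter F y0 (Suc (Suc n)) t - picard_iter F y0 (Suc n) t)
      = norm (integral {0..t} (\<lambda>s. F (picard_iter F y0 (Suc n) s) - F (picard_iter F y0 n s)))"
    unfolding picard_iter_Suc_diff[OF Suc.prems] by simp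
  also have "\<dots> \<le> integral {0..t} (\<lambda>s. ?C * s ^ Suc n)"
  proof (rule integral_norm_bound_integral)
    show "(\<lambda>s. F (picard_iter F y0 (Suc n) s) - F (picard_iter F y0 n s)) integrable_on {0..t}"
      using integrable_field_picard_iter[OF Suc.prems] by (intro integrable_diff)
    show "(\<lambda>s. ?C * s ^ Suc n) integrable_on {0..t}" using hi by blast
    fix s assume "s \<in> {0..t}"
    then have s: "s \<in> {0..1}" using Suc.prems by auto
    have "norm (F (picard_iter F y0 (Suc n) s) - F (picard_iter F y0 n s))
        \<le> L * norm (picard_iter F y0 (Suc n) s - picard_iter F y0 n s)"
      by (rule field_dist_le)
    also have "\<dots> \<le> L * (norm (F y0) * L ^ n * (s ^ Suc n / fact (Suc n)))"
      using Suc.IH[OF s] L_nonneg by (intro mult_left_mono) auto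
    also have "\<dots> = ?C * s ^ Suc n" by (simp add: field_simps)
    finally show "norm (F (picard_iter F y0 (Suc n) s) - F (picard_iter F y0 n s)) \<le> ?C * s ^ Suc n" .
  qed
  also have "\<dots> = ?C * (t ^ Suc (Suc n) / Suc (Suc n))" by (rule integral_unique[OF hi])
  also have "\<dots> = norm (F y0) * L ^ Suc n * (t ^ Suc (Suc n) / fact (Suc (Suc n)))"
    by (simp add: field_simps del: of_nat_Suc fact_Suc) (simp add: fact_Suc algebra_simps)
  finally show ?case .
qed simp

lemma uniform_limit_picard_iter:
  "uniform_limit {0..1} (picard_iter F y0) (picard_sol F y0) sequentially"
proof -
  define S where "S t = y0 + (\<Sum>i. picard_iter F y0 (Suc i) t - picard_iter F y0 i t)" for t
  have telescope: "y0 + (\<Sum>i<n. picard_iter F y0 (Suc i) t - picard_iter F y0 i t) = picard_iter F y0 n t"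
    for n t by (subst sum_lessThan_telescope[of "\<lambda>i. picard_iter F y0 i t"]) simp
  have "uniform_limit {0..1} (\<lambda>n t. \<Sum>i<n. picard_iter F y0 (Suc i) t - picard_iter F y0 i t)
      (\<lambda>t. \<Sum>i. picard_iter F y0 (Suc i) t - picard_iter F y0 i t) sequentially"
  proof (rule Weierstrass_m_test)
    show "summable (\<lambda>n. norm (F y0) * (inverse (fact n) * L ^ n))"
      by (intro summable_mult summable_exp)
    fix n and t :: real assume t: "t \<in> {0..1}"
    have "norm (picard_iter F y0 (Suc n) t - picard_iter F y0 n t) \<le> norm (F y0) * L ^ n * (t ^ Suc n / fact (Suc n))"
      by (rule picard_iter_step_le[OF t])
    also have "\<dots> \<le> norm (F y0) * L ^ n * (1 / fact n)"
      using t L_nonneg by (intro mult_left_mono frac_le power_le_one fact_mono) auto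
    also have "\<dots> = norm (F y0) * (inverse (fact n) * L ^ n)"
      by (simp add: field_simps)
    finally show "norm (picard_iter F y0 (Suc n) t - picard_iter F y0 n t) \<le> norm (F y0) * (inverse (fact n) * L ^ n)" .
  qed
  then have "uniform_limit {0..1} (\<lambda>n t. y0 + (\<Sum>i<n. picard_iter F y0 (Suc i) t - picard_iter F y0 i t)) S sequentially"
    unfolding S_def by (intro uniform_limit_add uniform_limit_const)
  then have ul: "uniform_limit {0..1} (picard_iter F y0) S sequentially"
    by (simp only: telescope)
  have "picard_sol F y0 t = S t" if "t \<in> {0..1}" for t
    unfolding picard_sol_def using tendsto_uniform_limitI[OF ul that] by (rule limI)
  then show ?thesis using ul uniform_limit_cong' by metis
qed

lemma picard_iter_tendsto: "t \<in> {0..1} \<Longrightarrow> (\<lambda>n. picard_iter F y0 n t) \<longlonglongrightarrow> picard_sol F y0 t"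
  by (rule tendsto_uniform_limitI[OF uniform_limit_picard_iter])

lemma continuous_on_picard_sol: "continuous_on {0..1} (picard_sol F y0)"
  by (rule uniform_limit_theorem[OF _ uniform_limit_picard_iter])
    (auto intro: always_eventually continuous_on_picard_iter)

lemma continuous_on_field_picard_sol: "continuous_on {0..1} (\<lambda>s. F (picard_sol F y0 s))"
  using continuous_on_compose2[OF continuous_on_field continuous_on_picard_sol] by auto

lemma picard_sol_integral_eq:
  assumes t: "t \<in> {0..1}"
  shows "picard_sol F y0 t = y0 + integral {0..t} (\<lambda>s. F (picard_sol F y0 s))"
proof -
  have c: "continuous_on {0..t} (\<lambda>s. F (picard_sol F y0 s))"
    using continuous_on_field_picard_sol by (rule continuous_on_subset) (use t in auto)
  have "(\<lambda>n. integral {0..t} (\<lambda>s. F (picard_iter F y0 n s))) \<longlonglongrightarrow> integral {0..t} (\<lambda>s. F (picard_sol F y0 s))"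
  proof (rule tendstoI)
    fix e :: real assume e: "e > 0"
    then have "e / (L + 1) > 0" using L_nonneg by auto
    from uniform_limitD[OF uniform_limit_picard_iter[of y0] this]
    show "\<forall>\<^sub>F n in sequentially. dist (integral {0..t} (\<lambda>s. F (picard_iter F y0 n s)))
        (integral {0..t} (\<lambda>s. F (picard_sol F y0 s))) < e"
    proof eventually_elim
      case (elim n)
      have int: "(\<lambda>s. F (picard_iter F y0 n s) - F (picard_sol F y0 s)) integrable_on {0..t}"
        using integrable_field_picard_iter[OF t] integrable_continuous_real[OF c] by (intro integrable_diff)
      have "norm (integral {0..t} (\<lambda>s. F (picard_iter F y0 n s) - F (picard_sol F y0 s)))
          \<le> integral {0..t} (\<lambda>s. L * (e / (L + 1)))"
      proof (rule integral_norm_bound_integral[OF int])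
        fix s assume "s \<in> {0..t}"
        then have "s \<in> {0..1}" using t by auto
        then have "norm (picard_iter F y0 n s - picard_sol F y0 s) \<le> e / (L + 1)"
          using elim by (auto simp: dist_norm intro: less_imp_le)
        then have "L * norm (picard_iter F y0 n s - picard_sol F y0 s) \<le> L * (e / (L + 1))"
          using L_nonneg by (rule mult_left_mono)
        then show "norm (F (picard_iter F y0 n s) - F (picard_sol F y0 s)) \<le> L * (e / (L + 1))"
          using field_dist_le order_trans by blast
      qed auto
      also have "\<dots> = t * (L * (e / (L + 1)))" using t by simp
      also have "\<dots> \<le> L * (e / (L + 1))"
        using t e L_nonneg by (intro mult_left_le_one_le) auto
      also have "\<dots> < e" using e L_nonneg by (simp add: field_simps)
      finally show ?case
        using integrable_field_picard_iter[OF t] integrable_continuous_real[OF c]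
        by (simp add: dist_norm integral_diff)
    qed
  qed
  then have "(\<lambda>n. picard_iter F y0 (Suc n) t) \<longlonglongrightarrow> y0 + integral {0..t} (\<lambda>s. F (picard_sol F y0 s))"
    by (simp add: tendsto_add)
  with LIMSEQ_Suc[OF picard_iter_tendsto[OF t]] show ?thesis using LIMSEQ_unique by blast
qed

lemma picard_sol_0: "picard_sol F y0 0 = y0"
  using picard_sol_integral_eq[of 0] by simp

lemma picard_sol_has_vector_derivative:
  assumes t: "t \<in> {0..1}"
  shows "(picard_sol F y0 has_vector_derivative F (picard_sol F y0 t)) (at t within {0..1})"
proof -
  have "((\<lambda>u. y0 + integral {0..u} (\<lambda>s. F (picard_sol F y0 s))) has_vector_derivative F (picard_sol F y0 t))
      (at t within {0..1})"
    using has_vector_derivative_add[OF has_vector_derivative_const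
        integral_has_vector_derivative[OF continuous_on_field_picard_sol t]] by simp
  then show ?thesis
    by (rule has_vector_derivative_transform[OF t, rotated]) (simp add: picard_sol_integral_eq)
qed

lemma picard_iter_initial_dist_le:
  assumes "t \<in> {0..1}"
  shows "norm (picard_iter F v n t - picard_iter F w n t) \<le> norm (v - w) * exp (L * t)"
  using assms
proof (induction n arbitrary: t)
  case 0
  then show ?case using L_nonneg by (simp add: mult_le_cancel_left1)
next
  case (Suc n)
  have hi: "((\<lambda>s. norm (v - w) * (L * exp (L * s))) has_integral norm (v - w) * (exp (L * t) - 1)) {0..t}"
    using Suc.prems by (intro has_integral_mult_right has_integral_exp_Icc) auto
  have "norm (picard_iter F v (Suc n) t - picard_iter F w (Suc n) t)
      \<le> norm (v - w) + norm (integral {0..t} (\<lambda>s. F (picard_iter F v n s) - F (picard_iter F w n s)))"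
    unfolding picard_iter_Suc_diff[OF Suc.prems] by (rule norm_triangle_ineq)
  also have "norm (integral {0..t} (\<lambda>s. F (picard_iter F v n s) - F (picard_iter F w n s)))
      \<le> integral {0..t} (\<lambda>s. norm (v - w) * (L * exp (L * s)))"
  proof (rule integral_norm_bound_integral)
    show "(\<lambda>s. F (picard_iter F v n s) - F (picard_iter F w n s)) integrable_on {0..t}"
      using integrable_field_picard_iter[OF Suc.prems] by (intro integrable_diff)
    show "(\<lambda>s. norm (v - w) * (L * exp (L * s))) integrable_on {0..t}" using hi by blast
    fix s assume "s \<in> {0..t}"
    then have s: "s \<in> {0..1}" using Suc.prems by auto
    have "norm (F (picard_iter F v n s) - F (picard_iter F w n s)) \<le> L * norm (picard_iter F v n s - picard_iter F w n s)"
      by (rule field_dist_le)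
    also have "\<dots> \<le> L * (norm (v - w) * exp (L * s))"
      using Suc.IH[OF s] L_nonneg by (intro mult_left_mono) auto
    finally show "norm (F (picard_iter F v n s) - F (picard_iter F w n s)) \<le> norm (v - w) * (L * exp (L * s))"
      by (simp add: algebra_simps)
  qed
  also have "\<dots> = norm (v - w) * (exp (L * t) - 1)" by (rule integral_unique[OF hi])
  finally show ?case by (simp add: algebra_simps)
qed

lemma picard_sol_initial_dist_le:
  assumes t: "t \<in> {0..1}"
  shows "norm (picard_sol F v t - picard_sol F w t) \<le> norm (v - w) * exp L"
proof (rule LIMSEQ_le_const2)
  show "(\<lambda>n. norm (picard_iter F v n t - picard_iter F w n t)) \<longlonglongrightarrow> norm (picard_sol F v t - picard_sol F w t)"
    by (intro tendsto_intros picard_iter_tendsto t)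
  have "norm (v - w) * exp (L * t) \<le> norm (v - w) * exp L"
    using t L_nonneg by (intro mult_left_mono) (auto simp: mult_left_le)
  then show "\<exists>N. \<forall>n\<ge>N. norm (picard_iter F v n t - picard_iter F w n t) \<le> norm (v - w) * exp L"
    using picard_iter_initial_dist_le[OF t] order_trans by blast
qed

end

lemma picard_sol_Pair_has_real_derivative:
  fixes F :: "real \<times> real \<Rightarrow> real \<times> real"
  assumes "lipschitz_field F L" and t: "t \<in> {0..1}"
  shows "((\<lambda>t. fst (picard_sol F y0 t)) has_real_derivative fst (F (picard_sol F y0 t))) (at t within {0..1})"
    and "((\<lambda>t. snd (picard_sol F y0 t)) has_real_derivative snd (F (picard_sol F y0 t))) (at t within {0..1})"
proof -
  interpret lipschitz_field F L by fact
  have d: "(picard_sol F y0 has_derivative (\<lambda>h. h *\<^sub>R F (picard_sol F y0 t))) (at t within {0..1})"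
    using picard_sol_has_vector_derivative[OF t] by (simp add: has_vector_derivative_def)
  show "((\<lambda>t. fst (picard_sol F y0 t)) has_real_derivative fst (F (picard_sol F y0 t))) (at t within {0..1})"
    using has_derivative_fst[OF d]
    by (simp add: has_real_derivative_iff_has_vector_derivative has_vector_derivative_def)
  show "((\<lambda>t. snd (picard_sol F y0 t)) has_real_derivative snd (F (picard_sol F y0 t))) (at t within {0..1})"
    using has_derivative_snd[OF d]
    by (simp add: has_real_derivative_iff_has_vector_derivative has_vector_derivative_def)
qed

section \<open>Comparison principle for cooperative planar systems\<close>

lemma first_root:
  fixes h :: "real \<Rightarrow> real"
  assumes h: "continuous_on {0..1} h" and h0: "h 0 > 0" and y: "y \<in> {0..1}" "h y \<le> 0"
  obtains x where "0 < x" "x \<le> 1" "h x = 0" "\<And>y. 0 \<le> y \<Longrightarrow> y < x \<Longrightarrow> h y > 0"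
proof -
  define S where "S = {0..1} \<inter> h -` {..0}"
  have closed: "closed S"
    unfolding S_def by (intro continuous_closed_preimage h closed_atMost closed_atLeastAtMost)
  have ne: "S \<noteq> {}" and bdd: "bdd_below S" using y by (auto simp: S_def bdd_below_def)
  define x where "x = Inf S"
  have xS: "x \<in> S" unfolding x_def by (rule closed_contains_Inf[OF ne bdd closed])
  then have x: "0 \<le> x" "x \<le> 1" "h x \<le> 0" by (auto simp: S_def)
  have pos: "h z > 0" if "0 \<le> z" "z < x" for z
    using cInf_lower[OF _ bdd, of z] that x by (force simp: S_def x_def)
  have "0 < x" using x h0 by (cases "x = 0") auto
  have "(h \<longlongrightarrow> h x) (at_left x)"
  proof -
    have "continuous_on {0..x} h" using h by (rule continuous_on_subset) (use x in auto)
    then have "(h \<longlongrightarrow> h x) (at x within {0..x})" using x by (auto simp: continuous_on_def)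
    then show ?thesis using at_within_Icc_at_left[OF \<open>0 < x\<close>] by simp
  qed
  moreover have "\<forall>\<^sub>F z in at_left x. 0 \<le> h z"
    unfolding eventually_at_left_field using \<open>0 < x\<close> pos less_imp_le by auto
  ultimately have "0 \<le> h x" by (rule tendsto_lowerbound) (simp add: trivial_limit_at_left_real)
  then show ?thesis using that \<open>0 < x\<close> x pos by auto
qed

lemma derivative_nonpos_at_first_root:
  fixes h :: "real \<Rightarrow> real"
  assumes d: "(h has_real_derivative D) (at x within {0..1})"
    and x: "0 < x" "x \<le> 1" and hx: "h x = 0" and pos: "\<And>y. 0 \<le> y \<Longrightarrow> y < x \<Longrightarrow> h y > 0"
  shows "D \<le> 0"
proof -
  have "(h has_real_derivative D) (at x within {0..x})"
    by (rule has_field_derivative_subset[OF d]) (use x in auto)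
  then have "((\<lambda>y. (h y - h x) / (y - x)) \<longlongrightarrow> D) (at_left x)"
    using at_within_Icc_at_left[OF x(1)] by (simp add: has_field_derivative_iff)
  moreover have "\<forall>\<^sub>F y in at_left x. (h y - h x) / (y - x) \<le> 0"
    unfolding eventually_at_left_field
    using x pos hx by (intro exI[of _ 0]) (auto simp: divide_pos_neg less_imp_le)
  ultimately show ?thesis by (rule tendsto_upperbound) (simp add: trivial_limit_at_left_real)
qed

text \<open>For \<open>r' = f r V\<close>, \<open>V' = g r\<close> with \<open>f\<close> nondecreasing in \<open>V\<close> and \<open>g\<close> nondecreasing (a
  cooperative system), a strict super-solution \<open>(P, W)\<close> lying above the solution at \<open>x = 0\<close> stays
  above it: at the first contact one component touches from above, and its derivative there gives a
  contradiction.\<close>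

lemma cooperative_comparison_above:
  fixes r V P W P' W' :: "real \<Rightarrow> real" and f :: "real \<Rightarrow> real \<Rightarrow> real" and g :: "real \<Rightarrow> real"
  assumes cr: "continuous_on {0..1} r" and cV: "continuous_on {0..1} V"
    and cP: "continuous_on {0..1} P" and cW: "continuous_on {0..1} W"
    and dr: "\<And>x. x \<in> {0..1} \<Longrightarrow> (r has_real_derivative f (r x) (V x)) (at x within {0..1})"
    and dV: "\<And>x. x \<in> {0..1} \<Longrightarrow> (V has_real_derivative g (r x)) (at x within {0..1})"
    and dP: "\<And>x. x \<in> {0..1} \<Longrightarrow> (P has_real_derivative P' x) (at x within {0..1})"
    and dW: "\<And>x. x \<in> {0..1} \<Longrightarrow> (W has_real_derivative W' x) (at x within {0..1})"
    and f_mono: "\<And>p a b. a \<le> b \<Longrightarrow> f p a \<le> f p b"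
    and g_mono: "\<And>a b. a \<le> b \<Longrightarrow> g a \<le> g b"
    and superP: "\<And>x. x \<in> {0..1} \<Longrightarrow> P' x > f (P x) (W x)"
    and superW: "\<And>x. x \<in> {0..1} \<Longrightarrow> W' x > g (P x)"
    and init: "r 0 < P 0" "V 0 < W 0"
  shows "\<forall>x\<in>{0..1}. r x < P x \<and> V x < W x"
proof (rule ccontr)
  define h where "h x = min (P x - r x) (W x - V x)" for x
  assume "\<not> ?thesis"
  then obtain y where "y \<in> {0..1}" "h y \<le> 0" by (force simp: h_def)
  moreover have "continuous_on {0..1} h" unfolding h_def by (intro continuous_intros cP cr cW cV)
  moreover have "h 0 > 0" using init by (simp add: h_def)
  ultimately obtain x where x: "0 < x" "x \<le> 1" and hx: "h x = 0"
    and pos: "\<And>y. 0 \<le> y \<Longrightarrow> y < x \<Longrightarrow> h y > 0"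
    using first_root by blast
  have xx: "x \<in> {0..1}" using x by simp
  have pos1: "P y - r y > 0" and pos2: "W y - V y > 0" if "0 \<le> y" "y < x" for y
    using pos[OF that] by (auto simp: h_def)
  show False
  proof (cases "P x - r x = 0")
    case True
    have "P' x - f (r x) (V x) \<le> 0"
      by (rule derivative_nonpos_at_first_root[where h="\<lambda>y. P y - r y", OF _ x True pos1])
        (auto intro!: derivative_intros dP dr xx)
    moreover have "f (r x) (V x) \<le> f (P x) (W x)" using True hx f_mono by (auto simp: h_def)
    ultimately show False using superP[OF xx] by auto
  next
    case False
    then have eq: "W x - V x = 0" using hx by (auto simp: h_def min_def split: if_splits)
    have "W' x - g (r x) \<le> 0"
      by (rule derivative_nonpos_at_first_root[where h="\<lambda>y. W y - V y", OF _ x eq pos2])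
        (auto intro!: derivative_intros dW dV xx)
    moreover have "g (r x) \<le> g (P x)" using hx g_mono by (auto simp: h_def)
    ultimately show False using superW[OF xx] by auto
  qed
qed

lemma cooperative_comparison_below:
  fixes r V Q Z Q' Z' :: "real \<Rightarrow> real" and f :: "real \<Rightarrow> real \<Rightarrow> real" and g :: "real \<Rightarrow> real"
  assumes cr: "continuous_on {0..1} r" and cV: "continuous_on {0..1} V"
    and cQ: "continuous_on {0..1} Q" and cZ: "continuous_on {0..1} Z"
    and dr: "\<And>x. x \<in> {0..1} \<Longrightarrow> (r has_real_derivative f (r x) (V x)) (at x within {0..1})"
    and dV: "\<And>x. x \<in> {0..1} \<Longrightarrow> (V has_real_derivative g (r x)) (at x within {0..1})"
    and dQ: "\<And>x. x \<in> {0..1} \<Longrightarrow> (Q has_real_derivative Q' x) (at x within {0..1})"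
    and dZ: "\<And>x. x \<in> {0..1} \<Longrightarrow> (Z has_real_derivative Z' x) (at x within {0..1})"
    and f_mono: "\<And>p a b. a \<le> b \<Longrightarrow> f p a \<le> f p b"
    and g_mono: "\<And>a b. a \<le> b \<Longrightarrow> g a \<le> g b"
    and subQ: "\<And>x. x \<in> {0..1} \<Longrightarrow> Q' x < f (Q x) (Z x)"
    and subZ: "\<And>x. x \<in> {0..1} \<Longrightarrow> Z' x < g (Q x)"
    and init: "Q 0 < r 0" "Z 0 < V 0"
  shows "\<forall>x\<in>{0..1}. Q x < r x \<and> Z x < V x"
proof -
  have "\<forall>x\<in>{0..1}. - r x < - Q x \<and> - V x < - Z x"
  proof (rule cooperative_comparison_above[where f="\<lambda>p a. - f (- p) (- a)" and g="\<lambda>p. - g (- p)"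
        and P'="\<lambda>x. - Q' x" and W'="\<lambda>x. - Z' x"])
    fix x :: real assume x: "x \<in> {0..1}"
    show "((\<lambda>x. - r x) has_real_derivative - f (- (- r x)) (- (- V x))) (at x within {0..1})"
      "((\<lambda>x. - V x) has_real_derivative - g (- (- r x))) (at x within {0..1})"
      "((\<lambda>x. - Q x) has_real_derivative - Q' x) (at x within {0..1})"
      "((\<lambda>x. - Z x) has_real_derivative - Z' x) (at x within {0..1})"
      using dr[OF x] dV[OF x] dQ[OF x] dZ[OF x] by (auto intro!: derivative_intros)
    show "- f (- (- Q x)) (- (- Z x)) < - Q' x" "- g (- (- Q x)) < - Z' x"
      using subQ[OF x] subZ[OF x] by simp_all
  qed (use cr cV cQ cZ init f_mono g_mono in \<open>auto intro!: continuous_intros\<close>)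
  then show ?thesis by auto
qed

section \<open>Classical solutions are weak solutions\<close>

lemma W12_integrable_derivative:
  assumes "W12 phi dphi"
  shows "integrable lborel (\<lambda>x. indicator {0..1} x * dphi x)"
proof (rule Bochner_Integration.integrable_bound)
  show "integrable lborel (\<lambda>x. indicator {0..1::real} x + indicator {0..1} x * (dphi x)^2)"
    using assms by (intro Bochner_Integration.integrable_add integrable_real_indicator)
      (auto simp: W12_def set_integrable_def)
  show "(\<lambda>x. indicator {0..1} x * dphi x) \<in> borel_measurable lborel"
    using assms by (simp add: W12_def set_borel_measurable_def)
  have "\<bar>d\<bar> \<le> 1 + d^2" for d :: real
  proof -
    have "0 \<le> (\<bar>d\<bar> - 1) * (\<bar>d\<bar> - 1)" by simp
    moreover have "\<bar>d\<bar> * \<bar>d\<bar> = d^2" by (simp add: power2_eq_square abs_mult_self_eq)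
    ultimately show ?thesis by (simp add: algebra_simps)
  qed
  then show "AE x in lborel. norm (indicator {0..1} x * dphi x)
      \<le> norm (indicator {0..1::real} x + indicator {0..1} x * (dphi x)^2)"
    by (intro AE_I2) (auto simp: indicator_def)
qed

lemma W12_of_derivative:
  assumes cg: "continuous_on {0..1} g"
    and dr: "\<And>x. x \<in> {0..1} \<Longrightarrow> (rho has_real_derivative g x) (at x within {0..1})"
  shows "W12 rho g"
  unfolding W12_def
proof (intro conjI ballI)
  show "set_borel_measurable lborel {0..1} g"
    unfolding set_borel_measurable_def
    using borel_measurable_continuous_on_indicator[OF _ cg] by (simp add: measurable_lborel1)
  show "set_integrable lborel {0..1} (\<lambda>t. (g t)^2)"
    by (intro borel_integrable_atLeastAtMost' continuous_intros cg)
  fix x :: real assume x: "x \<in> {0..1}"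
  have "(LINT t:{0..x}|lborel. g t) = rho x - rho 0"
    unfolding set_lebesgue_integral_def
  proof (rule integral_FTC_atLeastAtMost)
    show "continuous_on {0..x} g" using cg by (rule continuous_on_subset) (use x in auto)
    fix y assume "0 \<le> y" "y \<le> x"
    then have "(rho has_real_derivative g y) (at y within {0..x})"
      using x by (intro has_field_derivative_subset[OF dr]) auto
    then show "(rho has_vector_derivative g y) (at y within {0..x})"
      by (simp add: has_real_derivative_iff_has_vector_derivative)
  qed (use x in auto)
  then show "rho x = rho 0 + (LINT t:{0..x}|lborel. g t)" by simp
qed

lemma Fubini_indefinite_integral:
  fixes D R :: "real \<Rightarrow> real"
  assumes D: "integrable lborel D" and R[measurable]: "R \<in> borel_measurable lborel"
    and R_bound: "\<And>t. \<bar>R t\<bar> \<le> C * indicator {0..1} t"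
  shows "integrable lborel (\<lambda>t. R t * (\<integral>x. indicator {..t} x * D x \<partial>lborel))"
    and "integrable lborel (\<lambda>x. D x * (\<integral>t. indicator {x..} t * R t \<partial>lborel))"
    and "(\<integral>t. R t * (\<integral>x. indicator {..t} x * D x \<partial>lborel) \<partial>lborel)
      = (\<integral>x. D x * (\<integral>t. indicator {x..} t * R t \<partial>lborel) \<partial>lborel)"
proof -
  have [measurable]: "D \<in> borel_measurable lborel" using D by auto
  define f where "f x t = D x * ((if x \<le> t then 1 else 0) * R t)" for x t :: real
  have fm: "case_prod f \<in> borel_measurable (lborel \<Otimes>\<^sub>M lborel)"
    unfolding f_def split_beta' by measurable
  have f_bound: "\<bar>f x t\<bar> \<le> \<bar>D x\<bar> * (C * indicator {0..1} t)" for x t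
    using R_bound[of t] by (auto simp: f_def abs_mult intro: mult_left_mono)
  have ind_int: "integrable lborel (\<lambda>t. \<bar>D x\<bar> * (C * indicator {0..1::real} t))" for x
    by (intro integrable_mult_right integrable_real_indicator) auto
  have fxm: "f x \<in> borel_measurable lborel" for x
    unfolding f_def by measurable
  have fx_int: "integrable lborel (f x)" for x
    by (rule Bochner_Integration.integrable_bound[OF ind_int[of x] fxm])
      (auto intro!: AE_I2 order_trans[OF f_bound abs_ge_self])
  have fint: "integrable (lborel \<Otimes>\<^sub>M lborel) (case_prod f)"
  proof (rule lborel_pair.Fubini_integrable[OF fm])
    show "AE x in lborel. integrable lborel (\<lambda>t. case_prod f (x, t))" using fx_int by simp
    show "integrable lborel (\<lambda>x. \<integral>t. norm (case_prod f (x, t)) \<partial>lborel)"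
    proof (rule Bochner_Integration.integrable_bound)
      show "integrable lborel (\<lambda>x. \<bar>D x\<bar> * (C * measure lborel {0..1::real}))"
        using D by auto
      show "(\<lambda>x. \<integral>t. norm (case_prod f (x, t)) \<partial>lborel) \<in> borel_measurable lborel"
        using fm by measurable
      have "(\<integral>t. norm (f x t) \<partial>lborel) \<le> (\<integral>t. \<bar>D x\<bar> * (C * indicator {0..1::real} t) \<partial>lborel)" for x
        using fx_int ind_int f_bound by (intro integral_mono) auto
      then show "AE x in lborel. norm (\<integral>t. norm (case_prod f (x, t)) \<partial>lborel)
          \<le> norm (\<bar>D x\<bar> * (C * measure lborel {0..1::real}))"
        by (intro AE_I2) (simp add: order_trans[OF _ abs_ge_self])
    qed
  qed
  have inner_x: "(\<integral>x. f x t \<partial>lborel) = R t * (\<integral>x. indicator {..t} x * D x \<partial>lborel)" for t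
  proof -
    have "(\<integral>x. f x t \<partial>lborel) = (\<integral>x. R t * (indicator {..t} x * D x) \<partial>lborel)"
      by (rule Bochner_Integration.integral_cong) (auto simp: f_def indicator_def)
    then show ?thesis by simp
  qed
  have inner_t: "(\<integral>t. f x t \<partial>lborel) = D x * (\<integral>t. indicator {x..} t * R t \<partial>lborel)" for x
  proof -
    have "(\<integral>t. f x t \<partial>lborel) = (\<integral>t. D x * (indicator {x..} t * R t) \<partial>lborel)"
      by (rule Bochner_Integration.integral_cong) (auto simp: f_def indicator_def)
    then show ?thesis by simp
  qed
  show "integrable lborel (\<lambda>t. R t * (\<integral>x. indicator {..t} x * D x \<partial>lborel))"
    using lborel_pair.integrable_snd[OF fint] by (simp add: inner_x)
  show "integrable lborel (\<lambda>x. D x * (\<integral>t. indicator {x..} t * R t \<partial>lborel))"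
    using lborel_pair.integrable_fst[OF fint] by (simp add: inner_t)
  show "(\<integral>t. R t * (\<integral>x. indicator {..t} x * D x \<partial>lborel) \<partial>lborel)
      = (\<integral>x. D x * (\<integral>t. indicator {x..} t * R t \<partial>lborel) \<partial>lborel)"
    using lborel_pair.Fubini_integral[OF fint] by (simp add: inner_x inner_t)
qed

lemma integration_by_parts_W12:
  fixes q q' phi dphi :: "real \<Rightarrow> real"
  assumes dq: "\<And>x. x \<in> {0..1} \<Longrightarrow> (q has_real_derivative q' x) (at x within {0..1})"
    and cq': "continuous_on {0..1} q'"
    and W: "W12 phi dphi" and phi0: "phi 0 = 0" and phi1: "phi 1 = 0"
  shows "(LINT x:{0..1}|lborel. q x * dphi x + q' x * phi x) = 0"
proof -
  define D where "D x = indicator {0..1} x * dphi x" for x :: real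
  define R where "R t = indicator {0..1} t * q' t" for t :: real
  have D_int: "integrable lborel D" unfolding D_def by (rule W12_integrable_derivative[OF W])
  have R_meas: "R \<in> borel_measurable lborel"
    unfolding R_def using borel_measurable_continuous_on_indicator[OF _ cq'] by (simp add: measurable_lborel1)
  obtain C where "\<forall>t\<in>{0..1}. \<bar>q' t\<bar> \<le> C"
    using compact_imp_bounded[OF compact_continuous_image[OF cq' compact_Icc]] by (auto simp: bounded_iff)
  then have R_bound: "\<bar>R t\<bar> \<le> C * indicator {0..1} t" for t by (auto simp: R_def indicator_def)
  note Fubini = Fubini_indefinite_integral[OF D_int R_meas R_bound]
  have phi_eq: "(\<integral>x. indicator {..t} x * D x \<partial>lborel) = phi t" if "t \<in> {0..1}" for t
  proof -
    have "(\<integral>x. indicator {..t} x * D x \<partial>lborel) = (\<integral>x. indicator {0..t} x * dphi x \<partial>lborel)"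
      using that by (intro Bochner_Integration.integral_cong) (auto simp: D_def indicator_def)
    then show ?thesis using W that phi0 by (simp add: W12_def set_lebesgue_integral_def)
  qed
  have q_eq: "(\<integral>t. indicator {x..} t * R t \<partial>lborel) = q 1 - q x" if x: "x \<in> {0..1}" for x
  proof -
    have "(\<integral>t. indicator {x..} t * R t \<partial>lborel) = (\<integral>t. indicator {x..1} t *\<^sub>R q' t \<partial>lborel)"
      using x by (intro Bochner_Integration.integral_cong) (auto simp: R_def indicator_def)
    also have "\<dots> = q 1 - q x"
    proof (rule integral_FTC_atLeastAtMost)
      show "continuous_on {x..1} q'" using cq' by (rule continuous_on_subset) (use x in auto)
      fix y assume "x \<le> y" "y \<le> 1"
      then have "(q has_real_derivative q' y) (at y within {x..1})"
        using x by (intro has_field_derivative_subset[OF dq]) auto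
      then show "(q has_vector_derivative q' y) (at y within {x..1})"
        by (simp add: has_real_derivative_iff_has_vector_derivative)
    qed (use x in auto)
    finally show ?thesis .
  qed
  have Rphi: "R t * (\<integral>x. indicator {..t} x * D x \<partial>lborel) = R t * phi t" for t
    using phi_eq[of t] by (cases "t \<in> {0..1}") (auto simp: R_def)
  have Dq: "D x * (\<integral>t. indicator {x..} t * R t \<partial>lborel) = D x * (q 1 - q x)" for x
    using q_eq[of x] by (cases "x \<in> {0..1}") (auto simp: D_def)
  have int_Rphi: "integrable lborel (\<lambda>t. R t * phi t)" and int_Dq1: "integrable lborel (\<lambda>x. D x * (q 1 - q x))"
    using Fubini(1,2) by (simp_all only: Rphi Dq)
  have int_Dq: "integrable lborel (\<lambda>x. D x * q x)"
    using Bochner_Integration.integrable_diff[OF integrable_mult_left[OF D_int, of "q 1"] int_Dq1]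
    by (simp add: algebra_simps)
  have "(\<integral>x. D x \<partial>lborel) = (\<integral>x. indicator {..1} x * D x \<partial>lborel)"
    by (intro Bochner_Integration.integral_cong) (auto simp: D_def indicator_def)
  then have "(\<integral>x. D x \<partial>lborel) = 0"
    using phi_eq[of 1] phi1 by simp
  then have "(\<integral>x. D x * (q 1 - q x) \<partial>lborel) = - (\<integral>x. D x * q x \<partial>lborel)"
    using Bochner_Integration.integral_diff[OF integrable_mult_left[OF D_int, of "q 1"] int_Dq]
    by (simp add: algebra_simps)
  then have "(\<integral>t. R t * phi t \<partial>lborel) = - (\<integral>x. D x * q x \<partial>lborel)"
    using Fubini(3) by (simp only: Rphi Dq)
  moreover have "(LINT x:{0..1}|lborel. q x * dphi x + q' x * phi x) = (\<integral>x. D x * q x + R x * phi x \<partial>lborel)"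
    unfolding set_lebesgue_integral_def
    by (rule Bochner_Integration.integral_cong) (auto simp: D_def R_def indicator_def)
  ultimately show ?thesis
    using Bochner_Integration.integral_add[OF int_Dq int_Rphi] by simp
qed

lemma weak_sol_of_classical:
  fixes rho V :: "real \<Rightarrow> real"
  assumes eps: "eps > 0"
    and crho: "continuous_on {0..1} rho" and cV: "continuous_on {0..1} V"
    and drho: "\<And>x. x \<in> {0..1} \<Longrightarrow> (rho has_real_derivative 2 / eps * (V x + rho x - (rho x)^2)) (at x within {0..1})"
    and dV: "\<And>x. x \<in> {0..1} \<Longrightarrow> (V has_real_derivative (OmA + OmD) * rho x - OmA) (at x within {0..1})"
    and rho0: "rho 0 = alpha" and rho1: "rho 1 = 1 - beta"
  shows "weak_sol eps OmA OmD alpha beta rho"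
proof -
  define g where "g x = 2 / eps * (V x + rho x - (rho x)^2)" for x
  define q where "q x = V x + rho x - (rho x)^2" for x
  define q' where "q' x = (OmA + OmD) * rho x - OmA + (1 - 2 * rho x) * g x" for x
  have cg: "continuous_on {0..1} g" unfolding g_def by (intro continuous_intros crho cV)
  have dr: "(rho has_real_derivative g x) (at x within {0..1})" if "x \<in> {0..1}" for x
    using drho[OF that] by (simp add: g_def)
  have dq: "(q has_real_derivative q' x) (at x within {0..1})" if x: "x \<in> {0..1}" for x
  proof -
    have "(q has_real_derivative (OmA + OmD) * rho x - OmA + g x - 2 * rho x * g x) (at x within {0..1})"
      unfolding q_def using dV[OF x] dr[OF x]
      by (auto intro!: derivative_eq_intros simp: power2_eq_square algebra_simps)
    then show ?thesis by (simp add: q'_def algebra_simps)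
  qed
  have integrand: "eps / 2 * g x * dphi x - ((2 * rho x - 1) * g x + OmA * (1 - rho x) - OmD * rho x) * phi x
      = q x * dphi x + q' x * phi x" for x dphi phi
  proof -
    have "eps / 2 * g x = q x" using eps by (simp add: g_def q_def)
    moreover have "(2 * rho x - 1) * g x + OmA * (1 - rho x) - OmD * rho x = - q' x"
      by (simp add: q'_def algebra_simps)
    ultimately show ?thesis by simp
  qed
  show ?thesis
    unfolding weak_sol_def
  proof (intro exI[of _ g] conjI allI impI rho0 rho1)
    show "W12 rho g" by (rule W12_of_derivative[OF cg dr])
    fix phi dphi assume phi: "W12 phi dphi \<and> phi 0 = 0 \<and> phi 1 = 0"
    show "(LINT x:{0..1}|lborel. eps / 2 * g x * dphi x
        - ((2 * rho x - 1) * g x + OmA * (1 - rho x) - OmD * rho x) * phi x) = 0"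
      unfolding integrand
    proof (rule integration_by_parts_W12[OF dq])
      show "continuous_on {0..1} q'" unfolding q'_def by (intro continuous_intros crho cg)
    qed (use phi in auto)
  qed
qed

section \<open>The first order system and its barriers\<close>

definition clip :: "real \<Rightarrow> real \<Rightarrow> real" where
  "clip B p = max (- B) (min B p)"

lemma clip_dist_le: "\<bar>clip B p - clip B q\<bar> \<le> \<bar>p - q\<bar>"
  by (auto simp: clip_def)

lemma abs_clip_le: "B \<ge> 0 \<Longrightarrow> \<bar>clip B p\<bar> \<le> B"
  by (auto simp: clip_def)

lemma clip_eq_self: "\<bar>p\<bar> \<le> B \<Longrightarrow> clip B p = p"
  by (auto simp: clip_def)

lemma clip_mono: "p \<le> q \<Longrightarrow> clip B p \<le> clip B q"
  by (auto simp: clip_def)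

definition rho_slope :: "real \<Rightarrow> real \<Rightarrow> real \<Rightarrow> real" where
  "rho_slope eps p a = 2 / eps * (a + p - p ^ 2)"

text \<open>In the system for \<open>(\<rho>, V)\<close>, \<open>c = \<Omega>\<^sub>A + \<Omega>\<^sub>D\<close> and \<open>rK = \<Omega>\<^sub>A / c\<close>. Clipping
  both arguments to \<open>[-B, B]\<close> makes the field globally Lipschitz; the barriers below keep the
  relevant solutions inside the box, where the clipping is inactive.\<close>

definition clipped_field :: "real \<Rightarrow> real \<Rightarrow> real \<Rightarrow> real \<Rightarrow> real \<times> real \<Rightarrow> real \<times> real" where
  "clipped_field B eps c rK z = (rho_slope eps (clip B (fst z)) (clip B (snd z)), c * (clip B (fst z) - rK))"

lemma lipschitz_clipped_field:
  assumes B: "B \<ge> 0" and eps: "eps > 0" and c: "c \<ge> 0"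
  shows "(2 / eps * (2 + 2 * B) + c)-lipschitz_on UNIV (clipped_field B eps c rK)"
proof (rule lipschitz_onI)
  fix y z :: "real \<times> real"
  obtain p a p' a' where yz: "y = (p, a)" "z = (p', a')" by fastforce
  have np: "\<bar>p - p'\<bar> \<le> dist y z" and na: "\<bar>a - a'\<bar> \<le> dist y z"
    by (simp_all add: yz dist_norm norm_Pair real_sqrt_ge_abs1 real_sqrt_ge_abs2)
  let ?u = "clip B p" and ?u' = "clip B p'" and ?w = "clip B a" and ?w' = "clip B a'"
  have du: "\<bar>?u - ?u'\<bar> \<le> \<bar>p - p'\<bar>" and dw: "\<bar>?w - ?w'\<bar> \<le> \<bar>a - a'\<bar>" by (rule clip_dist_le)+
  have "\<bar>?u ^ 2 - ?u' ^ 2\<bar> = \<bar>?u + ?u'\<bar> * \<bar>?u - ?u'\<bar>"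
    by (simp add: power2_eq_square algebra_simps abs_mult[symmetric])
  also have "\<dots> \<le> (2 * B) * \<bar>p - p'\<bar>"
    using abs_clip_le[OF B, of p] abs_clip_le[OF B, of p'] du by (intro mult_mono) auto
  finally have "\<bar>(?w + ?u - ?u ^ 2) - (?w' + ?u' - ?u' ^ 2)\<bar> \<le> \<bar>a - a'\<bar> + \<bar>p - p'\<bar> + 2 * B * \<bar>p - p'\<bar>"
    using du dw by linarith
  also have "\<dots> \<le> (2 + 2 * B) * dist y z"
    using np na B mult_left_mono[OF np, of "2 * B"] by (simp add: algebra_simps)
  finally have "2 / eps * \<bar>(?w + ?u - ?u ^ 2) - (?w' + ?u' - ?u' ^ 2)\<bar> \<le> 2 / eps * ((2 + 2 * B) * dist y z)"
    using eps by (intro mult_left_mono) auto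
  then have "\<bar>rho_slope eps ?u ?w - rho_slope eps ?u' ?w'\<bar> \<le> 2 / eps * ((2 + 2 * B) * dist y z)"
    unfolding rho_slope_def right_diff_distrib[symmetric] abs_mult using eps by simp
  moreover have "\<bar>c * (?u - rK) - c * (?u' - rK)\<bar> \<le> c * dist y z"
    using du np c by (simp add: right_diff_distrib[symmetric] abs_mult mult_left_mono)
  ultimately show "dist (clipped_field B eps c rK y) (clipped_field B eps c rK z) \<le> (2 / eps * (2 + 2 * B) + c) * dist y z"
    using norm_Pair_le[of "rho_slope eps ?u ?w - rho_slope eps ?u' ?w'" "c * (?u - rK) - c * (?u' - rK)"]
    by (simp add: clipped_field_def yz dist_norm algebra_simps)
qed (use B eps c in auto)

locale outer_solution =
  fixes c rK :: real and rb :: "real \<Rightarrow> real"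
  assumes c_pos: "c > 0"
    and rb_gt_half: "\<And>x. x \<in> {0..1} \<Longrightarrow> rb x > 1/2"
    and rb_ode: "\<And>x. x \<in> {0..1} \<Longrightarrow>
      (rb has_real_derivative (c * (rb x - rK) / (2 * (rb x - 1/2)))) (at x within {0..1})"
begin

definition drb where "drb x = c * (rb x - rK) / (2 * (rb x - 1/2))"

definition Vb where "Vb x = rb x ^ 2 - rb x"

lemma rb_has_derivative: "x \<in> {0..1} \<Longrightarrow> (rb has_real_derivative drb x) (at x within {0..1})"
  using rb_ode by (simp add: drb_def)

lemma continuous_on_rb: "continuous_on {0..1} rb"
  using rb_has_derivative DERIV_continuous_on by blast

lemma continuous_on_drb: "continuous_on {0..1} drb"
  unfolding drb_def by (intro continuous_intros continuous_on_rb) (use rb_gt_half in force)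

lemma Vb_has_derivative: "x \<in> {0..1} \<Longrightarrow> (Vb has_real_derivative c * (rb x - rK)) (at x within {0..1})"
proof -
  assume x: "x \<in> {0..1}"
  have "(Vb has_real_derivative (2 * rb x - 1) * drb x) (at x within {0..1})"
    unfolding Vb_def[abs_def] using rb_has_derivative[OF x]
    by (auto intro!: derivative_eq_intros simp: algebra_simps)
  moreover have "(2 * rb x - 1) * drb x = c * (rb x - rK)"
    using rb_gt_half[OF x] by (simp add: drb_def field_simps)
  ultimately show ?thesis by simp
qed

lemma outer_solution_bounds:
  obtains m0 Mr M1 where "m0 > 0" "M1 \<ge> 0"
    "\<And>x. x \<in> {0..1} \<Longrightarrow> m0 \<le> 2 * rb x - 1 \<and> 2 * rb x - 1 \<le> Mr \<and> \<bar>drb x\<bar> \<le> M1"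
proof -
  have ne: "{0..1::real} \<noteq> {}" by simp
  have c1: "continuous_on {0..1} (\<lambda>x. 2 * rb x - 1)" by (intro continuous_intros continuous_on_rb)
  have c2: "continuous_on {0..1} (\<lambda>x. \<bar>drb x\<bar>)" by (intro continuous_intros continuous_on_drb)
  obtain a where a: "a \<in> {0..1}" "\<forall>y\<in>{0..1}. 2 * rb a - 1 \<le> 2 * rb y - 1"
    using continuous_attains_inf[OF compact_Icc ne c1] by blast
  obtain b where "\<forall>y\<in>{0..1}. 2 * rb y - 1 \<le> 2 * rb b - 1"
    using continuous_attains_sup[OF compact_Icc ne c1] by blast
  moreover obtain d where "\<forall>y\<in>{0..1}. \<bar>drb y\<bar> \<le> \<bar>drb d\<bar>"
    using continuous_attains_sup[OF compact_Icc ne c2] by blast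
  ultimately show ?thesis
    using that[of "2 * rb a - 1" "\<bar>drb d\<bar>" "2 * rb b - 1"] a rb_gt_half[OF a(1)] by auto
qed

text \<open>The barriers perturb the outer solution by a slowly varying \<open>\<delta>\<close> (for \<open>\<rho>\<close>) and \<open>\<gamma>\<close>
  (for \<open>V\<close>) and by a boundary layer \<open>l\<^sub>0 exp (-\<kappa> x / \<epsilon>)\<close> at \<open>x = 0\<close>; the \<open>V\<close>-barriers
  carry the integral of the layer's contribution to \<open>V'\<close> and a drift \<open>\<epsilon> x\<close> that makes them
  strict.\<close>

definition rho_upper where
  "rho_upper eps kap l0 del x = rb x + del x + l0 * exp (- (kap / eps) * x)"
definition V_upper where
  "V_upper eps kap l0 gam x = Vb x + gam x + c * l0 * (eps / kap) * (1 - exp (- (kap / eps) * x)) + eps * x"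
definition rho_lower where
  "rho_lower eps kap l0 del x = rb x - del x - l0 * exp (- (kap / eps) * x)"
definition V_lower where
  "V_lower eps kap l0 gam x = Vb x - gam x - c * l0 * (eps / kap) * (1 - exp (- (kap / eps) * x)) - eps * x"

lemma layer_integral_has_derivative:
  assumes "eps > 0" "kap > 0"
  shows "((\<lambda>x. c * l0 * (eps / kap) * (1 - exp (- (kap / eps) * x))) has_real_derivative
    c * l0 * exp (- (kap / eps) * x)) (at x within S)"
proof -
  have "((\<lambda>x. c * l0 * (eps / kap) * (1 - exp (- (kap / eps) * x))) has_real_derivative
      c * l0 * (eps / kap) * (- (exp (- (kap / eps) * x) * (- (kap / eps))))) (at x within S)"
    by (intro derivative_eq_intros) auto
  then show ?thesis using assms by (simp add: field_simps)
qed

lemma layer_integral_bounds: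
  assumes "eps > 0" "kap > 0" "l0 \<ge> 0" "x \<ge> 0"
  shows "0 \<le> c * l0 * (eps / kap) * (1 - exp (- (kap / eps) * x))"
    and "c * l0 * (eps / kap) * (1 - exp (- (kap / eps) * x)) \<le> c * l0 * eps / kap"
proof -
  have e: "0 \<le> 1 - exp (- (kap / eps) * x)" "1 - exp (- (kap / eps) * x) \<le> 1"
    and k: "0 \<le> c * l0 * (eps / kap)" using assms c_pos by simp_all
  show "0 \<le> c * l0 * (eps / kap) * (1 - exp (- (kap / eps) * x))"
    using k e(1) by (rule mult_nonneg_nonneg)
  have "c * l0 * (eps / kap) * (1 - exp (- (kap / eps) * x)) \<le> c * l0 * (eps / kap) * 1"
    using e(2) k by (rule mult_left_mono)
  then show "c * l0 * (eps / kap) * (1 - exp (- (kap / eps) * x)) \<le> c * l0 * eps / kap"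
    by simp
qed

lemma rho_upper_has_derivative:
  assumes "eps > 0" "kap > 0" "x \<in> {0..1}" "(del has_real_derivative del' x) (at x within {0..1})"
  shows "(rho_upper eps kap l0 del has_real_derivative
    drb x + del' x - (kap / eps) * (l0 * exp (- (kap / eps) * x))) (at x within {0..1})"
  unfolding rho_upper_def[abs_def] using rb_has_derivative[OF assms(3)] assms
  by (auto intro!: derivative_eq_intros)

lemma rho_lower_has_derivative:
  assumes "eps > 0" "kap > 0" "x \<in> {0..1}" "(del has_real_derivative del' x) (at x within {0..1})"
  shows "(rho_lower eps kap l0 del has_real_derivative
    drb x - del' x + (kap / eps) * (l0 * exp (- (kap / eps) * x))) (at x within {0..1})"
  unfolding rho_lower_def[abs_def] using rb_has_derivative[OF assms(3)] assms
  by (auto intro!: derivative_eq_intros)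

lemma V_upper_has_derivative:
  assumes "eps > 0" "kap > 0" "x \<in> {0..1}" "(gam has_real_derivative gam' x) (at x within {0..1})"
  shows "(V_upper eps kap l0 gam has_real_derivative
    c * (rb x - rK) + gam' x + c * l0 * exp (- (kap / eps) * x) + eps) (at x within {0..1})"
  unfolding V_upper_def[abs_def]
  using DERIV_add[OF DERIV_add[OF DERIV_add[OF Vb_has_derivative[OF assms(3)] assms(4)]
      layer_integral_has_derivative[OF assms(1,2)]] DERIV_cmult_Id[of eps x "{0..1}"]]
  by simp

lemma V_lower_has_derivative:
  assumes "eps > 0" "kap > 0" "x \<in> {0..1}" "(gam has_real_derivative gam' x) (at x within {0..1})"
  shows "(V_lower eps kap l0 gam has_real_derivative
    c * (rb x - rK) - gam' x - c * l0 * exp (- (kap / eps) * x) - eps) (at x within {0..1})"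
  unfolding V_lower_def[abs_def]
  using DERIV_diff[OF DERIV_diff[OF DERIV_diff[OF Vb_has_derivative[OF assms(3)] assms(4)]
      layer_integral_has_derivative[OF assms(1,2)]] DERIV_cmult_Id[of eps x "{0..1}"]]
  by simp

lemma upper_barrier_strict:
  assumes eps: "eps > 0" and kap: "kap > 0" and l0: "l0 \<ge> 0" and mu: "mu > 0" and x: "x \<in> {0..1}"
    and gam_growth: "gam' x \<ge> c * del x"
    and gap: "gam x - (2 * rb x - 1) * del x \<le> - mu"
    and m: "m \<le> 2 * rb x - 1" "kap \<le> 2 * m"
    and M: "\<bar>drb x + del' x\<bar> \<le> M"
    and eps_mu: "eps + c * l0 * eps / kap \<le> mu / 2"
    and eps_Mb: "eps * M < mu"
  shows "drb x + del' x - (kap / eps) * (l0 * exp (- (kap / eps) * x))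
      > rho_slope eps (rho_upper eps kap l0 del x) (V_upper eps kap l0 gam x)"
    and "c * (rb x - rK) + gam' x + c * l0 * exp (- (kap / eps) * x) + eps > c * (rho_upper eps kap l0 del x - rK)"
proof -
  define E where "E = exp (- (kap / eps) * x)"
  define l where "l = l0 * E"
  define lam where "lam = c * l0 * (eps / kap) * (1 - E)"
  have l_ge: "l \<ge> 0" using l0 by (simp add: l_def E_def)
  have lam_le: "lam \<le> c * l0 * eps / kap" using layer_integral_bounds[OF eps kap l0, of x] x by (simp add: lam_def E_def)
  have P: "rho_upper eps kap l0 del x = rb x + (del x + l)" by (simp add: rho_upper_def l_def E_def)
  have W: "V_upper eps kap l0 gam x = Vb x + gam x + lam + eps * x" by (simp add: V_upper_def lam_def E_def)
  have id: "V_upper eps kap l0 gam x + rho_upper eps kap l0 del x - (rho_upper eps kap l0 del x) ^ 2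
      = gam x + lam + eps * x - (2 * rb x - 1) * del x - (2 * rb x - 1) * l - (del x + l) ^ 2"
    unfolding P W Vb_def by (simp add: power2_eq_square algebra_simps)
  have "eps * x \<le> eps" using x eps by (simp add: mult_left_le)
  moreover have "(2 * rb x - 1) * l \<ge> m * l" using m l_ge by (intro mult_right_mono) auto
  moreover have "(del x + l) ^ 2 \<ge> 0" by simp
  ultimately have S: "V_upper eps kap l0 gam x + rho_upper eps kap l0 del x - (rho_upper eps kap l0 del x) ^ 2
      \<le> - mu / 2 - m * l"
    unfolding id using gap eps_mu lam_le by linarith
  have "rho_slope eps (rho_upper eps kap l0 del x) (V_upper eps kap l0 gam x) \<le> 2 / eps * (- mu / 2 - m * l)"
    unfolding rho_slope_def using S eps by (intro mult_left_mono) auto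
  also have "\<dots> = - (mu / eps) - (2 * m / eps) * l" using eps by (simp add: field_simps)
  also have "\<dots> < - M - (kap / eps) * l"
  proof -
    have "M < mu / eps" using eps_Mb eps by (simp add: field_simps)
    moreover have "(kap / eps) * l \<le> (2 * m / eps) * l"
      using m l_ge eps by (intro mult_right_mono divide_right_mono) auto
    ultimately show ?thesis by linarith
  qed
  also have "\<dots> \<le> drb x + del' x - (kap / eps) * (l0 * exp (- (kap / eps) * x))"
    using M by (simp add: l_def E_def abs_le_iff)
  finally show "drb x + del' x - (kap / eps) * (l0 * exp (- (kap / eps) * x))
      > rho_slope eps (rho_upper eps kap l0 del x) (V_upper eps kap l0 gam x)" .
  show "c * (rb x - rK) + gam' x + c * l0 * exp (- (kap / eps) * x) + eps > c * (rho_upper eps kap l0 del x - rK)"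
    using gam_growth eps unfolding P by (simp add: l_def E_def algebra_simps)
qed

lemma lower_barrier_strict:
  assumes eps: "eps > 0" and kap: "kap > 0" and l0: "l0 \<ge> 0" and mu: "mu > 0" and x: "x \<in> {0..1}"
    and gam_growth: "gam' x \<ge> c * del x"
    and gap: "(2 * rb x - 1) * del x - (del x) ^ 2 - gam x \<ge> mu"
    and m: "m > 0" "kap \<le> 2 * m" "l0 * exp (- (kap / eps) * x) \<le> 2 * rb x - 1 - 2 * del x - m"
    and M: "\<bar>drb x - del' x\<bar> \<le> M"
    and eps_mu: "eps + c * l0 * eps / kap \<le> mu / 2"
    and eps_Mb: "eps * M < mu"
  shows "drb x - del' x + (kap / eps) * (l0 * exp (- (kap / eps) * x))
      < rho_slope eps (rho_lower eps kap l0 del x) (V_lower eps kap l0 gam x)"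
    and "c * (rb x - rK) - gam' x - c * l0 * exp (- (kap / eps) * x) - eps < c * (rho_lower eps kap l0 del x - rK)"
proof -
  define E where "E = exp (- (kap / eps) * x)"
  define l where "l = l0 * E"
  define lam where "lam = c * l0 * (eps / kap) * (1 - E)"
  have l_ge: "l \<ge> 0" using l0 by (simp add: l_def E_def)
  have lam_le: "lam \<le> c * l0 * eps / kap" using layer_integral_bounds[OF eps kap l0, of x] x by (simp add: lam_def E_def)
  have Q: "rho_lower eps kap l0 del x = rb x - (del x + l)" by (simp add: rho_lower_def l_def E_def)
  have Z: "V_lower eps kap l0 gam x = Vb x - gam x - lam - eps * x" by (simp add: V_lower_def lam_def E_def)
  have id: "V_lower eps kap l0 gam x + rho_lower eps kap l0 del x - (rho_lower eps kap l0 del x) ^ 2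
      = ((2 * rb x - 1) * del x - (del x) ^ 2 - gam x) + l * (2 * rb x - 1 - 2 * del x - l) - lam - eps * x"
    unfolding Q Z Vb_def by (simp add: power2_eq_square algebra_simps)
  have lm: "l * m = m * l" by simp
  have "eps * x \<le> eps" using x eps by (simp add: mult_left_le)
  moreover have "l * (2 * rb x - 1 - 2 * del x - l) \<ge> l * m"
    using m(3) l_ge by (intro mult_left_mono) (auto simp: l_def E_def)
  ultimately have S: "V_lower eps kap l0 gam x + rho_lower eps kap l0 del x - (rho_lower eps kap l0 del x) ^ 2
      \<ge> mu / 2 + m * l"
    unfolding id using gap eps_mu lam_le lm by linarith
  have "drb x - del' x + (kap / eps) * (l0 * exp (- (kap / eps) * x)) \<le> M + (kap / eps) * l"
    using M by (simp add: l_def E_def abs_le_iff)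
  also have "\<dots> < mu / eps + (2 * m / eps) * l"
  proof -
    have "M < mu / eps" using eps_Mb eps by (simp add: field_simps)
    moreover have "(kap / eps) * l \<le> (2 * m / eps) * l"
      using m l_ge eps by (intro mult_right_mono divide_right_mono) auto
    ultimately show ?thesis by linarith
  qed
  also have "\<dots> = 2 / eps * (mu / 2 + m * l)" using eps by (simp add: field_simps)
  also have "\<dots> \<le> rho_slope eps (rho_lower eps kap l0 del x) (V_lower eps kap l0 gam x)"
    unfolding rho_slope_def using S eps by (intro mult_left_mono) auto
  finally show "drb x - del' x + (kap / eps) * (l0 * exp (- (kap / eps) * x))
      < rho_slope eps (rho_lower eps kap l0 del x) (V_lower eps kap l0 gam x)" .
  show "c * (rb x - rK) - gam' x - c * l0 * exp (- (kap / eps) * x) - eps < c * (rho_lower eps kap l0 del x - rK)"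
    using gam_growth eps unfolding Q by (simp add: l_def E_def algebra_simps)
qed

end

section \<open>Shooting from \<open>\<rho>(0) = \<alpha>\<close>\<close>

lemma exp_neg_le_inverse:
  assumes "(t::real) > 0"
  shows "exp (- t) \<le> 1 / t"
proof -
  have "t \<le> exp t" using exp_ge_add_one_self[of t] by linarith
  then have "1 / exp t \<le> 1 / t" using assms by (intro divide_left_mono) auto
  then show ?thesis by (simp add: exp_minus field_simps)
qed

lemma nbhd_memI:
  assumes bdd: "bdd_above (rhohat ` {0..1})" "bdd_below (rhohat ` {0..1})"
    and near: "\<And>x. x \<in> {0..1} \<Longrightarrow> \<exists>y1 y2. y1 \<in> {0..1} \<and> y2 \<in> {0..1} \<and> \<bar>y1 - x\<bar> \<le> Delta \<and> \<bar>y2 - x\<bar> \<le> Delta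
      \<and> rhohat y1 - Delta < rho x \<and> rho x < rhohat y2 + Delta"
  shows "rho \<in> nbhd rhohat Delta"
  unfolding nbhd_def
proof (intro CollectI ballI)
  fix x :: real assume "x \<in> {0..1}"
  then obtain y1 y2 where y: "y1 \<in> {0..1}" "y2 \<in> {0..1}" "\<bar>y1 - x\<bar> \<le> Delta" "\<bar>y2 - x\<bar> \<le> Delta"
    and r: "rhohat y1 - Delta < rho x" "rho x < rhohat y2 + Delta"
    using near by blast
  define W where "W = {0..1} \<inter> {x - Delta..x + Delta}"
  have "y1 \<in> W" "y2 \<in> W" using y by (auto simp: W_def abs_le_iff)
  moreover have "bdd_above (rhohat ` W)" "bdd_below (rhohat ` W)"
    using bdd by (auto simp: W_def intro: bdd_above_mono bdd_below_mono)
  ultimately have "Inf (rhohat ` W) \<le> rhohat y1" "rhohat y2 \<le> Sup (rhohat ` W)"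
    by (auto intro: cInf_lower cSup_upper)
  then show "Inf (rhohat ` ({0..1} \<inter> {x - Delta..x + Delta})) - Delta < rho x \<and>
      rho x < Sup (rhohat ` ({0..1} \<inter> {x - Delta..x + Delta})) + Delta"
    using r by (simp add: W_def)
qed

lemma eps_lim_of_eventually:
  assumes "\<And>Delta. Delta > 0 \<Longrightarrow> \<forall>\<^sub>F eps in at_right 0. rhos eps \<in> nbhd rhohat Delta"
  shows "eps_lim rhos rhohat"
  using assms unfolding eps_lim_def eventually_at_right_field by blast

lemma eventually_mult_less_at_right_0:
  assumes "0 < k"
  shows "\<forall>\<^sub>F eps in at_right 0. a * eps < (k::real)"
proof -
  have "((\<lambda>eps. a * eps) \<longlongrightarrow> 0) (at_right (0::real))"
    by (intro tendsto_eq_intros) auto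
  then show ?thesis using assms by (rule order_tendstoD)
qed

locale shooting = outer_solution c rK rb for c rK :: real and rb :: "real \<Rightarrow> real" +
  fixes alpha m0 Mr M1 :: real
  assumes m0_pos: "m0 > 0" and M1_nonneg: "M1 \<ge> 0"
    and rb_bounds: "\<And>x. x \<in> {0..1} \<Longrightarrow> m0 \<le> 2 * rb x - 1 \<and> 2 * rb x - 1 \<le> Mr \<and> \<bar>drb x\<bar> \<le> M1"
    and alpha_gt: "alpha > 1 - rb 0"
begin

text \<open>The barriers come in two families: \<open>\<delta> = A \<gamma>\<close>, \<open>\<gamma> = g e\<^sup>L\<^sup>g\<^sup>x\<close> keeps a
  solution shot with \<open>|V(0) - Vb(0)| < g\<close> close to \<open>\<rho>\<^sup>b\<close>, and the constant \<open>\<delta> = \<mp>B g\<close>, \<open>\<gamma> = \<mp>g\<close> decides the sign of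
  \<open>\<rho>(1) - \<rho>\<^sup>b(1)\<close> when \<open>V(0)\<close> misses \<open>Vb(0)\<close> by more than \<open>g\<close>. The layer decays at
  rate \<open>\<kappa> / \<epsilon>\<close>, its amplitude is at most \<open>Lmax\<close>, and \<open>B0\<close> is the clipping radius.\<close>

definition "margin = alpha - (1 - rb 0)"
definition "A = 2 / m0"
definition "Lg = c * A"
definition "B = 1 / (2 * Mr)"
definition "D0 = min (margin / 12) (m0 / 8)"
definition "kap = min margin m0 / 4"
definition "gmax = min (min (D0 / (A * exp Lg)) (1 / (2 * A ^ 2 * exp Lg))) (min (D0 / B) (1 / (4 * B ^ 2)))"
definition "Lmax = \<bar>rb 0\<bar> + D0 + \<bar>alpha\<bar> + 1"
definition "Rb = (Mr + 1) / 2"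
definition "Mb = M1 + A * Lg * gmax * exp Lg"
definition "B0 = Rb + D0 + Lmax + (Rb ^ 2 + Rb) + gmax * exp Lg + c * Lmax / kap + 1"
definition "x1 = margin / (8 * (M1 + 1))"

lemma margin_pos: "margin > 0" using alpha_gt by (simp add: margin_def)
lemma Mr_ge: "Mr \<ge> m0" using rb_bounds[of 0] by auto
lemma A_pos: "A > 0" using m0_pos by (simp add: A_def)
lemma Lg_pos: "Lg > 0" using c_pos A_pos by (simp add: Lg_def)
lemma B_pos: "B > 0" using Mr_ge m0_pos by (simp add: B_def)
lemma D0_pos: "D0 > 0" using margin_pos m0_pos by (simp add: D0_def)
lemma kap_pos: "kap > 0" using margin_pos m0_pos by (simp add: kap_def)
lemma gmax_pos: "gmax > 0" using D0_pos A_pos B_pos by (simp add: gmax_def)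
lemma Lmax_ge1: "Lmax \<ge> 1" using D0_pos by (simp add: Lmax_def)
lemma x1_pos: "x1 > 0" using margin_pos M1_nonneg by (simp add: x1_def)
lemma kap_le: "kap \<le> margin / 4" "kap \<le> m0 / 4" by (auto simp: kap_def)
lemma D0_le: "D0 \<le> margin / 12" "D0 \<le> m0 / 8" by (auto simp: D0_def)

lemma gmax_le:
  "A * gmax * exp Lg \<le> D0" "A ^ 2 * gmax * exp Lg \<le> 1/2" "B * gmax \<le> D0" "B ^ 2 * gmax \<le> 1/4"
proof -
  have "gmax \<le> D0 / (A * exp Lg)" "gmax \<le> 1 / (2 * A ^ 2 * exp Lg)" "gmax \<le> D0 / B" "gmax \<le> 1 / (4 * B ^ 2)"
    by (simp_all add: gmax_def)
  then show "A * gmax * exp Lg \<le> D0" "A ^ 2 * gmax * exp Lg \<le> 1/2" "B * gmax \<le> D0" "B ^ 2 * gmax \<le> 1/4"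
    using A_pos B_pos by (simp_all add: field_simps)
qed

lemma abs_rb_le: "x \<in> {0..1} \<Longrightarrow> \<bar>rb x\<bar> \<le> Rb"
  using rb_gt_half[of x] rb_bounds[of x] by (auto simp: Rb_def)

lemma Rb_nonneg: "Rb \<ge> 0"
  using abs_rb_le[of 0] by simp

lemma abs_Vb_le: "x \<in> {0..1} \<Longrightarrow> \<bar>Vb x\<bar> \<le> Rb ^ 2 + Rb"
proof -
  assume x: "x \<in> {0..1}"
  have "\<bar>Vb x\<bar> \<le> \<bar>rb x ^ 2\<bar> + \<bar>rb x\<bar>" unfolding Vb_def by (rule abs_triangle_ineq4)
  also have "\<dots> = \<bar>rb x\<bar> ^ 2 + \<bar>rb x\<bar>" by (simp add: power_abs)
  also have "\<dots> \<le> Rb ^ 2 + Rb" using abs_rb_le[OF x] by (intro add_mono power_mono) auto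
  finally show ?thesis .
qed

lemma rb_dist_0_le: "x \<in> {0..1} \<Longrightarrow> \<bar>rb x - rb 0\<bar> \<le> M1 * x"
  using field_differentiable_bound[where f'=drb and S="{0..1}" and x=x and y=0] rb_has_derivative rb_bounds
  by force

definition "rho_shoot eps v x = fst (picard_sol (clipped_field B0 eps c rK) (alpha, v) x)"
definition "V_shoot eps v x = snd (picard_sol (clipped_field B0 eps c rK) (alpha, v) x)"

lemma lipschitz_field_shoot: "eps > 0 \<Longrightarrow> lipschitz_field (clipped_field B0 eps c rK) (2 / eps * (2 + 2 * B0) + c)"
proof unfold_locales
  have "B0 \<ge> 0" using Rb_nonneg D0_pos Lmax_ge1 gmax_pos c_pos kap_pos by (simp add: B0_def)
  then show "eps > 0 \<Longrightarrow> (2 / eps * (2 + 2 * B0) + c)-lipschitz_on UNIV (clipped_field B0 eps c rK)"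
    using c_pos by (intro lipschitz_clipped_field) auto
qed

lemma continuous_on_rho_shoot: "eps > 0 \<Longrightarrow> continuous_on {0..1} (rho_shoot eps v)"
  and continuous_on_V_shoot: "eps > 0 \<Longrightarrow> continuous_on {0..1} (V_shoot eps v)"
  using continuous_on_fst[OF lipschitz_field.continuous_on_picard_sol[OF lipschitz_field_shoot]]
    continuous_on_snd[OF lipschitz_field.continuous_on_picard_sol[OF lipschitz_field_shoot]]
  by (simp_all add: rho_shoot_def[abs_def] V_shoot_def[abs_def])

lemma rho_shoot_has_derivative: "eps > 0 \<Longrightarrow> x \<in> {0..1} \<Longrightarrow>
    (rho_shoot eps v has_real_derivative rho_slope eps (clip B0 (rho_shoot eps v x)) (clip B0 (V_shoot eps v x)))
      (at x within {0..1})"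
  and V_shoot_has_derivative: "eps > 0 \<Longrightarrow> x \<in> {0..1} \<Longrightarrow>
    (V_shoot eps v has_real_derivative c * (clip B0 (rho_shoot eps v x) - rK)) (at x within {0..1})"
  using picard_sol_Pair_has_real_derivative[OF lipschitz_field_shoot]
  by (simp_all add: rho_shoot_def[abs_def] V_shoot_def[abs_def] clipped_field_def)

lemma rho_shoot_0: "eps > 0 \<Longrightarrow> rho_shoot eps v 0 = alpha"
  and V_shoot_0: "eps > 0 \<Longrightarrow> V_shoot eps v 0 = v"
  using lipschitz_field.picard_sol_0[OF lipschitz_field_shoot]
  by (simp_all add: rho_shoot_def V_shoot_def)

lemma rho_shoot_initial_dist_le:
  assumes "eps > 0" "x \<in> {0..1}"
  shows "\<bar>rho_shoot eps v x - rho_shoot eps w x\<bar> \<le> \<bar>v - w\<bar> * exp (2 / eps * (2 + 2 * B0) + c)"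
proof -
  define z where
    "z = picard_sol (clipped_field B0 eps c rK) (alpha, v) x - picard_sol (clipped_field B0 eps c rK) (alpha, w) x"
  have "\<bar>fst z\<bar> \<le> norm z" using norm_fst_le[of "fst z" "snd z"] by simp
  also have "\<dots> \<le> \<bar>v - w\<bar> * exp (2 / eps * (2 + 2 * B0) + c)"
    using lipschitz_field.picard_sol_initial_dist_le[OF lipschitz_field_shoot[OF assms(1)] assms(2),
        of "(alpha, v)" "(alpha, w)"]
    by (simp add: z_def norm_Pair)
  finally show ?thesis by (simp add: z_def rho_shoot_def)
qed

lemma continuous_rho_shoot_end: "eps > 0 \<Longrightarrow> continuous_on S (\<lambda>v. rho_shoot eps v 1)"
  by (rule lipschitz_on_continuous_on[where L="exp (2 / eps * (2 + 2 * B0) + c)"])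
    (use rho_shoot_initial_dist_le in \<open>auto simp: lipschitz_on_def dist_real_def mult.commute\<close>)

definition "layer_up eps d0 = max 0 (alpha - rb 0 - d0) + eps"
definition "layer_lo eps d0 = max 0 (rb 0 - d0 - alpha) + eps"

lemma layer_up_bounds: "0 < eps \<Longrightarrow> eps \<le> 1 \<Longrightarrow> \<bar>d0\<bar> \<le> D0 \<Longrightarrow> 0 \<le> layer_up eps d0 \<and> layer_up eps d0 \<le> Lmax"
  by (auto simp: layer_up_def Lmax_def)

lemma layer_lo_bounds: "0 < eps \<Longrightarrow> eps \<le> 1 \<Longrightarrow> \<bar>d0\<bar> \<le> D0 \<Longrightarrow> 0 \<le> layer_lo eps d0 \<and> layer_lo eps d0 \<le> Lmax"
  by (auto simp: layer_lo_def Lmax_def)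

lemma abs_rho_barriers_le:
  assumes eps: "0 < eps" "eps \<le> 1" and x: "x \<in> {0..1}" and d: "\<bar>del x\<bar> \<le> D0" and l: "0 \<le> l0" "l0 \<le> Lmax"
  shows "\<bar>rho_upper eps kap l0 del x\<bar> \<le> B0" "\<bar>rho_lower eps kap l0 del x\<bar> \<le> B0"
proof -
  have E: "l0 * exp (- (kap / eps) * x) \<le> Lmax" "0 \<le> l0 * exp (- (kap / eps) * x)"
    using eps x kap_pos l by (auto intro: mult_le_one order_trans[OF mult_right_le_one_le])
  have "Rb + D0 + Lmax \<le> B0" using Rb_nonneg Lmax_ge1 gmax_pos c_pos kap_pos by (simp add: B0_def)
  then show "\<bar>rho_upper eps kap l0 del x\<bar> \<le> B0" "\<bar>rho_lower eps kap l0 del x\<bar> \<le> B0"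
    using abs_rb_le[OF x] d E by (auto simp: rho_upper_def rho_lower_def)
qed

lemma abs_V_barriers_le:
  assumes eps: "0 < eps" "eps \<le> 1" and x: "x \<in> {0..1}" and g: "\<bar>gam x\<bar> \<le> gmax * exp Lg" and l: "0 \<le> l0" "l0 \<le> Lmax"
  shows "\<bar>V_upper eps kap l0 gam x\<bar> \<le> B0" "\<bar>V_lower eps kap l0 gam x\<bar> \<le> B0"
proof -
  have lb: "0 \<le> c * l0 * (eps / kap) * (1 - exp (- (kap / eps) * x))"
    "c * l0 * (eps / kap) * (1 - exp (- (kap / eps) * x)) \<le> c * l0 * eps / kap"
    using layer_integral_bounds[OF eps(1) kap_pos l(1), of x] x by auto
  have "c * l0 * eps / kap \<le> c * Lmax / kap"
  proof -
    have "l0 * eps \<le> Lmax * 1" using l eps by (intro mult_mono) auto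
    then show ?thesis using c_pos kap_pos by (simp add: divide_right_mono mult_left_mono mult.assoc)
  qed
  moreover have "eps * x \<le> 1" "0 \<le> eps * x" using eps x by (auto intro: mult_le_one)
  moreover have "\<bar>Vb x\<bar> \<le> Rb ^ 2 + Rb" by (rule abs_Vb_le[OF x])
  ultimately show "\<bar>V_upper eps kap l0 gam x\<bar> \<le> B0" "\<bar>V_lower eps kap l0 gam x\<bar> \<le> B0"
    using g lb D0_pos Lmax_ge1 Rb_nonneg unfolding V_upper_def V_lower_def B0_def by linarith+
qed

lemma rho_slope_clip_mono: "0 < eps \<Longrightarrow> a \<le> b \<Longrightarrow> rho_slope eps (clip B0 p) (clip B0 a) \<le> rho_slope eps (clip B0 p) (clip B0 b)"
  unfolding rho_slope_def using clip_mono[of a b B0] by (intro mult_left_mono) auto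

lemma V_slope_clip_mono: "a \<le> b \<Longrightarrow> c * (clip B0 a - rK) \<le> c * (clip B0 b - rK)"
  using clip_mono[of a b B0] c_pos by (intro mult_left_mono) auto

lemma rho_shoot_below_super_solution:
  assumes eps: "0 < eps"
    and dP: "\<And>x. x \<in> {0..1} \<Longrightarrow> (P has_real_derivative P' x) (at x within {0..1})"
    and dW: "\<And>x. x \<in> {0..1} \<Longrightarrow> (W has_real_derivative W' x) (at x within {0..1})"
    and box: "\<And>x. x \<in> {0..1} \<Longrightarrow> \<bar>P x\<bar> \<le> B0 \<and> \<bar>W x\<bar> \<le> B0"
    and superP: "\<And>x. x \<in> {0..1} \<Longrightarrow> P' x > rho_slope eps (P x) (W x)"
    and superW: "\<And>x. x \<in> {0..1} \<Longrightarrow> W' x > c * (P x - rK)"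
    and init: "alpha < P 0" "v < W 0"
  shows "\<forall>x\<in>{0..1}. rho_shoot eps v x < P x \<and> V_shoot eps v x < W x"
proof (rule cooperative_comparison_above[where f="\<lambda>p a. rho_slope eps (clip B0 p) (clip B0 a)"
      and g="\<lambda>p. c * (clip B0 p - rK)", OF continuous_on_rho_shoot[OF eps] continuous_on_V_shoot[OF eps]
      DERIV_continuous_on[OF dP] DERIV_continuous_on[OF dW] rho_shoot_has_derivative[OF eps]
      V_shoot_has_derivative[OF eps] dP dW])
  fix x :: real assume x: "x \<in> {0..1}"
  then have "clip B0 (P x) = P x" "clip B0 (W x) = W x" using box by (auto intro: clip_eq_self)
  then show "P' x > rho_slope eps (clip B0 (P x)) (clip B0 (W x))" "W' x > c * (clip B0 (P x) - rK)"
    using superP[OF x] superW[OF x] by simp_all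
qed (use rho_slope_clip_mono[OF eps] V_slope_clip_mono rho_shoot_0[OF eps] V_shoot_0[OF eps] init in auto)

lemma rho_shoot_above_sub_solution:
  assumes eps: "0 < eps"
    and dQ: "\<And>x. x \<in> {0..1} \<Longrightarrow> (Q has_real_derivative Q' x) (at x within {0..1})"
    and dZ: "\<And>x. x \<in> {0..1} \<Longrightarrow> (Z has_real_derivative Z' x) (at x within {0..1})"
    and box: "\<And>x. x \<in> {0..1} \<Longrightarrow> \<bar>Q x\<bar> \<le> B0 \<and> \<bar>Z x\<bar> \<le> B0"
    and subQ: "\<And>x. x \<in> {0..1} \<Longrightarrow> Q' x < rho_slope eps (Q x) (Z x)"
    and subZ: "\<And>x. x \<in> {0..1} \<Longrightarrow> Z' x < c * (Q x - rK)"
    and init: "Q 0 < alpha" "Z 0 < v"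
  shows "\<forall>x\<in>{0..1}. Q x < rho_shoot eps v x \<and> Z x < V_shoot eps v x"
proof (rule cooperative_comparison_below[where f="\<lambda>p a. rho_slope eps (clip B0 p) (clip B0 a)"
      and g="\<lambda>p. c * (clip B0 p - rK)", OF continuous_on_rho_shoot[OF eps] continuous_on_V_shoot[OF eps]
      DERIV_continuous_on[OF dQ] DERIV_continuous_on[OF dZ] rho_shoot_has_derivative[OF eps]
      V_shoot_has_derivative[OF eps] dQ dZ])
  fix x :: real assume x: "x \<in> {0..1}"
  then have "clip B0 (Q x) = Q x" "clip B0 (Z x) = Z x" using box by (auto intro: clip_eq_self)
  then show "Q' x < rho_slope eps (clip B0 (Q x)) (clip B0 (Z x))" "Z' x < c * (clip B0 (Q x) - rK)"
    using subQ[OF x] subZ[OF x] by simp_all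
qed (use rho_slope_clip_mono[OF eps] V_slope_clip_mono rho_shoot_0[OF eps] V_shoot_0[OF eps] init in auto)

lemma rho_shoot_below_upper_barrier:
  fixes gam del gam' del' :: "real \<Rightarrow> real"
  assumes eps: "0 < eps" "eps \<le> 1" and mu: "mu > 0"
    and gam_deriv: "\<And>x. x \<in> {0..1} \<Longrightarrow> (gam has_real_derivative gam' x) (at x within {0..1})"
    and del_deriv: "\<And>x. x \<in> {0..1} \<Longrightarrow> (del has_real_derivative del' x) (at x within {0..1})"
    and small: "\<And>x. x \<in> {0..1} \<Longrightarrow> \<bar>del x\<bar> \<le> D0 \<and> \<bar>gam x\<bar> \<le> gmax * exp Lg \<and> \<bar>del' x\<bar> \<le> A * Lg * gmax * exp Lg"
    and gam_growth: "\<And>x. x \<in> {0..1} \<Longrightarrow> gam' x \<ge> c * del x"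
    and gap: "\<And>x. x \<in> {0..1} \<Longrightarrow> gam x - (2 * rb x - 1) * del x \<le> - mu"
    and eps_mu: "eps + c * Lmax * eps / kap \<le> mu / 2" and eps_Mb: "eps * Mb < mu"
    and v: "v < Vb 0 + gam 0"
  shows "\<forall>x\<in>{0..1}. rho_shoot eps v x < rho_upper eps kap (layer_up eps (del 0)) del x
    \<and> V_shoot eps v x < V_upper eps kap (layer_up eps (del 0)) gam x"
proof -
  define l0 where "l0 = layer_up eps (del 0)"
  have l0b: "0 \<le> l0" "l0 \<le> Lmax" using layer_up_bounds[OF eps] small[of 0, simplified] by (auto simp: l0_def)
  have dP: "(rho_upper eps kap l0 del has_real_derivative
      drb x + del' x - (kap / eps) * (l0 * exp (- (kap / eps) * x))) (at x within {0..1})" if "x \<in> {0..1}" for x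
    using rho_upper_has_derivative[where del=del and del'=del', OF eps(1) kap_pos that del_deriv[OF that]] .
  have dW: "(V_upper eps kap l0 gam has_real_derivative
      c * (rb x - rK) + gam' x + c * l0 * exp (- (kap / eps) * x) + eps) (at x within {0..1})" if "x \<in> {0..1}" for x
    using V_upper_has_derivative[where gam=gam and gam'=gam', OF eps(1) kap_pos that gam_deriv[OF that]] .
  have eps_mu': "eps + c * l0 * eps / kap \<le> mu / 2"
  proof -
    have "c * l0 * eps / kap \<le> c * Lmax * eps / kap"
      using l0b c_pos eps kap_pos by (intro divide_right_mono mult_right_mono mult_left_mono) auto
    then show ?thesis using eps_mu by linarith
  qed
  have "\<forall>x\<in>{0..1}. rho_shoot eps v x < rho_upper eps kap l0 del x \<and> V_shoot eps v x < V_upper eps kap l0 gam x"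
  proof (rule rho_shoot_below_super_solution[OF eps(1) dP dW])
    fix x :: real assume x: "x \<in> {0..1}"
    show "\<bar>rho_upper eps kap l0 del x\<bar> \<le> B0 \<and> \<bar>V_upper eps kap l0 gam x\<bar> \<le> B0"
      using abs_rho_barriers_le(1)[OF eps x _ l0b] abs_V_barriers_le(1)[OF eps x _ l0b] small[OF x] by auto
    have "\<bar>drb x\<bar> \<le> M1" "\<bar>del' x\<bar> \<le> A * Lg * gmax * exp Lg" using rb_bounds[OF x] small[OF x] by auto
    then have Mbx: "\<bar>drb x + del' x\<bar> \<le> Mb" unfolding Mb_def by linarith
    have kk: "kap \<le> 2 * m0" using kap_le m0_pos by linarith
    have m0x: "m0 \<le> 2 * rb x - 1" using rb_bounds[OF x] by blast
    show "rho_slope eps (rho_upper eps kap l0 del x) (V_upper eps kap l0 gam x)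
        < drb x + del' x - kap / eps * (l0 * exp (- (kap / eps) * x))"
      and "c * (rho_upper eps kap l0 del x - rK) < c * (rb x - rK) + gam' x + c * l0 * exp (- (kap / eps) * x) + eps"
      using upper_barrier_strict[where gam=gam and del=del and gam'=gam' and del'=del',
          OF eps(1) kap_pos l0b(1) mu x gam_growth[OF x] gap[OF x] m0x kk Mbx eps_mu' eps_Mb]
      by auto
  next
    show "alpha < rho_upper eps kap l0 del 0" using eps by (simp add: rho_upper_def l0_def layer_up_def)
    show "v < V_upper eps kap l0 gam 0" using v by (simp add: V_upper_def)
  qed
  then show ?thesis by (simp add: l0_def)
qed

lemma exp_layer_le:
  assumes "0 < eps" "0 < w" "w \<le> x"
  shows "exp (- (kap / eps) * x) \<le> eps / (kap * w)"
proof -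
  have "kap / eps * w \<le> kap / eps * x" using assms kap_pos by (intro mult_left_mono) auto
  then have "exp (- (kap / eps) * x) \<le> exp (- (kap / eps * w))" by simp
  also have "\<dots> \<le> 1 / (kap / eps * w)" using assms kap_pos by (intro exp_neg_le_inverse) auto
  finally show ?thesis by simp
qed

text \<open>The lower barrier \<open>\<rho>\<^sup>b - \<delta> - l\<close> stays above \<open>1 - \<rho>\<^sup>b + \<delta>\<close> by a margin \<open>\<kappa>\<close>;
  at \<open>x = 0\<close>, where \<open>l\<close> is \<open>\<rho>\<^sup>b(0) - \<alpha>\<close> up to \<open>\<delta>\<close> and \<open>\<epsilon>\<close>, this is where
  \<open>\<alpha> > 1 - \<rho>\<^sup>b(0)\<close> is needed.\<close>

lemma layer_lo_le_gap:
  assumes eps: "0 < eps" "eps \<le> 1" "eps \<le> margin / 4" "eps \<le> m0 / 2" "Lmax * eps / (kap * x1) \<le> m0 / 4"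
    and small: "\<And>x. x \<in> {0..1} \<Longrightarrow> \<bar>del x\<bar> \<le> D0"
    and x: "x \<in> {0..1}"
  shows "layer_lo eps (del 0) * exp (- (kap / eps) * x) \<le> 2 * rb x - 1 - 2 * del x - kap"
proof -
  define E where "E = exp (- (kap / eps) * x)"
  have E: "0 < E" "E \<le> 1" using x kap_pos eps by (auto simp: E_def)
  have l0b: "0 \<le> layer_lo eps (del 0)" "layer_lo eps (del 0) \<le> Lmax"
    using layer_lo_bounds[OF eps(1,2) small[of 0, simplified]] by auto
  have dx: "\<bar>del x\<bar> \<le> D0" "\<bar>del 0\<bar> \<le> D0" using small x by auto
  have m0x: "m0 \<le> 2 * rb x - 1" using rb_bounds[OF x] by blast
  have kl: "kap \<le> margin / 4" "kap \<le> m0 / 4" by (rule kap_le)+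
  have Dl: "D0 \<le> margin / 12" "D0 \<le> m0 / 8" by (rule D0_le)+
  have R1: "2 * rb x - 1 - 2 * del x - kap \<ge> m0 / 2" using m0x dx kl Dl by linarith
  have main: "layer_lo eps (del 0) * E \<le> 2 * rb x - 1 - 2 * del x - kap"
  proof (cases "rb 0 - del 0 - alpha \<le> 0")
    case True
    then have "layer_lo eps (del 0) = eps" by (simp add: layer_lo_def)
    then have "layer_lo eps (del 0) * E \<le> eps" using E eps by (simp add: mult_left_le)
    then show ?thesis using R1 eps by linarith
  next
    case False
    then have l0: "layer_lo eps (del 0) = rb 0 - del 0 - alpha + eps" by (simp add: layer_lo_def)
    show ?thesis
    proof (cases "x \<le> x1")
      case True
      have "layer_lo eps (del 0) * E \<le> layer_lo eps (del 0)" using E l0b by (simp add: mult_left_le)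
      moreover have "\<bar>rb x - rb 0\<bar> \<le> M1 * x" by (rule rb_dist_0_le[OF x])
      moreover have "M1 * x \<le> M1 * x1" using True M1_nonneg by (intro mult_left_mono) auto
      moreover have "2 * (M1 * x1) \<le> margin / 4"
      proof -
        have "M1 + 1 > 0" using M1_nonneg by simp
        then have "2 * (M1 * x1) = margin * (M1 / (4 * (M1 + 1)))" by (simp add: x1_def field_simps)
        also have "\<dots> \<le> margin * (1 / 4)" using margin_pos M1_nonneg by (intro mult_left_mono) (auto simp: field_simps)
        finally show ?thesis by simp
      qed
      moreover have "alpha = 1 - rb 0 + margin" by (simp add: margin_def)
      ultimately show ?thesis using l0 dx kl Dl eps by linarith
    next
      case False
      then have E2: "E \<le> eps / (kap * x1)" unfolding E_def using eps x1_pos by (intro exp_layer_le) auto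
      have "layer_lo eps (del 0) * E \<le> Lmax * (eps / (kap * x1))"
        using E2 l0b E by (intro mult_mono) auto
      also have "\<dots> = Lmax * eps / (kap * x1)" by simp
      finally show ?thesis using eps R1 kl m0_pos by linarith
    qed
  qed
  then show ?thesis by (simp add: E_def)
qed

lemma rho_shoot_above_lower_barrier:
  fixes gam del gam' del' :: "real \<Rightarrow> real"
  assumes eps: "0 < eps" "eps \<le> 1" "eps \<le> margin / 4" "eps \<le> m0 / 2" "Lmax * eps / (kap * x1) \<le> m0 / 4"
    and mu: "mu > 0"
    and gam_deriv: "\<And>x. x \<in> {0..1} \<Longrightarrow> (gam has_real_derivative gam' x) (at x within {0..1})"
    and del_deriv: "\<And>x. x \<in> {0..1} \<Longrightarrow> (del has_real_derivative del' x) (at x within {0..1})"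
    and small: "\<And>x. x \<in> {0..1} \<Longrightarrow> \<bar>del x\<bar> \<le> D0 \<and> \<bar>gam x\<bar> \<le> gmax * exp Lg \<and> \<bar>del' x\<bar> \<le> A * Lg * gmax * exp Lg"
    and gam_growth: "\<And>x. x \<in> {0..1} \<Longrightarrow> gam' x \<ge> c * del x"
    and gap: "\<And>x. x \<in> {0..1} \<Longrightarrow> (2 * rb x - 1) * del x - (del x)^2 - gam x \<ge> mu"
    and eps_mu: "eps + c * Lmax * eps / kap \<le> mu / 2" and eps_Mb: "eps * Mb < mu"
    and v: "v > Vb 0 - gam 0"
  shows "\<forall>x\<in>{0..1}. rho_lower eps kap (layer_lo eps (del 0)) del x < rho_shoot eps v x
    \<and> V_lower eps kap (layer_lo eps (del 0)) gam x < V_shoot eps v x"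
proof -
  define l0 where "l0 = layer_lo eps (del 0)"
  have l0b: "0 \<le> l0" "l0 \<le> Lmax" using layer_lo_bounds[OF eps(1,2)] small[of 0, simplified] by (auto simp: l0_def)
  have dQ: "(rho_lower eps kap l0 del has_real_derivative
      drb x - del' x + (kap / eps) * (l0 * exp (- (kap / eps) * x))) (at x within {0..1})" if "x \<in> {0..1}" for x
    using rho_lower_has_derivative[where del=del and del'=del', OF eps(1) kap_pos that del_deriv[OF that]] .
  have dZ: "(V_lower eps kap l0 gam has_real_derivative
      c * (rb x - rK) - gam' x - c * l0 * exp (- (kap / eps) * x) - eps) (at x within {0..1})" if "x \<in> {0..1}" for x
    using V_lower_has_derivative[where gam=gam and gam'=gam', OF eps(1) kap_pos that gam_deriv[OF that]] .
  have eps_mu': "eps + c * l0 * eps / kap \<le> mu / 2"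
  proof -
    have "c * l0 * eps / kap \<le> c * Lmax * eps / kap"
      using l0b c_pos eps kap_pos by (intro divide_right_mono mult_right_mono mult_left_mono) auto
    then show ?thesis using eps_mu by linarith
  qed
  have "\<forall>x\<in>{0..1}. rho_lower eps kap l0 del x < rho_shoot eps v x \<and> V_lower eps kap l0 gam x < V_shoot eps v x"
  proof (rule rho_shoot_above_sub_solution[OF eps(1) dQ dZ])
    fix x :: real assume x: "x \<in> {0..1}"
    show "\<bar>rho_lower eps kap l0 del x\<bar> \<le> B0 \<and> \<bar>V_lower eps kap l0 gam x\<bar> \<le> B0"
      using abs_rho_barriers_le(2)[OF eps(1,2) x _ l0b] abs_V_barriers_le(2)[OF eps(1,2) x _ l0b] small[OF x]
      by auto
    have "\<bar>drb x\<bar> \<le> M1" "\<bar>del' x\<bar> \<le> A * Lg * gmax * exp Lg" using rb_bounds[OF x] small[OF x] by auto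
    then have Mbx: "\<bar>drb x - del' x\<bar> \<le> Mb" unfolding Mb_def by linarith
    have kk: "kap \<le> 2 * kap" using kap_pos by linarith
    have lc: "l0 * exp (- (kap / eps) * x) \<le> 2 * rb x - 1 - 2 * del x - kap"
      unfolding l0_def by (rule layer_lo_le_gap[OF eps _ x]) (use small in blast)
    show "drb x - del' x + kap / eps * (l0 * exp (- (kap / eps) * x))
        < rho_slope eps (rho_lower eps kap l0 del x) (V_lower eps kap l0 gam x)"
      and "c * (rb x - rK) - gam' x - c * l0 * exp (- (kap / eps) * x) - eps < c * (rho_lower eps kap l0 del x - rK)"
      using lower_barrier_strict[where gam=gam and del=del and gam'=gam' and del'=del',
          OF eps(1) kap_pos l0b(1) mu x gam_growth[OF x] gap[OF x] kap_pos kk lc Mbx eps_mu' eps_Mb]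
      by auto
  next
    show "rho_lower eps kap l0 del 0 < alpha" using eps by (simp add: rho_lower_def l0_def layer_lo_def)
    show "V_lower eps kap l0 gam 0 < v" using v by (simp add: V_lower_def)
  qed
  then show ?thesis by (simp add: l0_def)
qed

definition "eps_small g eps \<longleftrightarrow> 0 < eps \<and> eps < 1 \<and> eps < margin / 4 \<and> eps < m0 / 2
  \<and> Lmax / (kap * x1) * eps < m0 / 4 \<and> (1 + c * Lmax / kap) * eps < g / 8 \<and> Mb * eps < g / 4
  \<and> Lmax / kap * eps < B * g"

lemma eventually_eps_small:
  assumes "g > 0"
  shows "\<forall>\<^sub>F eps in at_right 0. eps_small g eps"
proof -
  have lt: "\<forall>\<^sub>F eps in at_right 0. eps < k" if "0 < k" for k :: real
    using eventually_mult_less_at_right_0[OF that, of 1] by simp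
  show ?thesis
    unfolding eps_small_def
    using assms margin_pos m0_pos B_pos
    by (intro eventually_conj eventually_at_right_less lt eventually_mult_less_at_right_0) auto
qed

lemma eps_small_mono:
  assumes "eps_small g eps" "g \<le> g'"
  shows "eps_small g' eps"
proof -
  have "B * g \<le> B * g'" using assms(2) B_pos by (intro mult_left_mono) auto
  then show ?thesis using assms by (auto simp: eps_small_def)
qed

lemma eps_smallD:
  assumes "eps_small g eps"
  shows "0 < eps" "eps \<le> 1" "eps \<le> margin / 4" "eps \<le> m0 / 2" "Lmax * eps / (kap * x1) \<le> m0 / 4"
    "eps + c * Lmax * eps / kap \<le> g / 8" "eps * Mb < g / 4" "Lmax * (eps / kap) < B * g"
    "0 \<le> c * Lmax * eps / kap"
  using assms c_pos Lmax_ge1 kap_pos by (auto simp: eps_small_def algebra_simps)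

abbreviation growth :: "real \<Rightarrow> real \<Rightarrow> real" where
  "growth g x \<equiv> g * exp (Lg * x)"

lemma growth_has_derivative: "(growth g has_real_derivative Lg * (growth g x)) (at x within S)"
  by (auto intro!: derivative_eq_intros)

lemma growth_A_has_derivative: "((\<lambda>x. A * growth g x) has_real_derivative A * (Lg * growth g x)) (at x within S)"
  by (auto intro!: derivative_eq_intros)

lemma exp_Lg_bounds: "x \<in> {0..1} \<Longrightarrow> 1 \<le> exp (Lg * x) \<and> exp (Lg * x) \<le> exp Lg"
  using Lg_pos by (auto simp: mult_left_le)

lemma two_le_gap_A: "x \<in> {0..1} \<Longrightarrow> 2 \<le> (2 * rb x - 1) * A"
proof -
  assume x: "x \<in> {0..1}"
  have "m0 * A \<le> (2 * rb x - 1) * A" using rb_bounds[OF x] A_pos by (intro mult_right_mono) auto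
  moreover have "m0 * A = 2" using m0_pos by (simp add: A_def)
  ultimately show ?thesis by simp
qed

lemma gap_B_le_half: "x \<in> {0..1} \<Longrightarrow> (2 * rb x - 1) * B \<le> 1 / 2"
proof -
  assume x: "x \<in> {0..1}"
  have "(2 * rb x - 1) * B \<le> Mr * B" using rb_bounds[OF x] B_pos by (intro mult_right_mono) auto
  moreover have "Mr * B = 1 / 2" using Mr_ge m0_pos by (simp add: B_def)
  ultimately show ?thesis by simp
qed

lemma growing_barrier_bounds:
  assumes g: "0 < g" "g \<le> gmax" and x: "x \<in> {0..1}"
  shows "\<bar>A * growth g x\<bar> \<le> D0 \<and> \<bar>growth g x\<bar> \<le> gmax * exp Lg \<and> \<bar>A * (Lg * growth g x)\<bar> \<le> A * Lg * gmax * exp Lg"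
proof -
  have ge: "growth g x \<le> gmax * exp Lg" using exp_Lg_bounds[OF x] g by (intro mult_mono) auto
  have p: "0 \<le> growth g x" using g by simp
  have "A * growth g x \<le> A * (gmax * exp Lg)" using ge A_pos by (intro mult_left_mono) auto
  then have "A * growth g x \<le> D0" using gmax_le(1) by (simp add: mult.assoc)
  moreover have "A * (Lg * growth g x) \<le> A * (Lg * (gmax * exp Lg))"
    using ge A_pos Lg_pos by (intro mult_left_mono) auto
  ultimately show ?thesis using p ge A_pos Lg_pos g by (simp add: abs_mult mult.assoc)
qed

lemma rho_shoot_below_growing_barrier:
  assumes g: "0 < g" "g \<le> gmax" and ok: "eps_small g eps" and v: "v < Vb 0 + g"
  shows "\<forall>x\<in>{0..1}. rho_shoot eps v x < rho_upper eps kap (layer_up eps (A * g)) (\<lambda>x. A * growth g x) x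
      \<and> V_shoot eps v x < V_upper eps kap (layer_up eps (A * g)) (growth g) x"
proof -
  have eps: "0 < eps" "eps \<le> 1" using eps_smallD[OF ok] by auto
  have "\<forall>x\<in>{0..1}. rho_shoot eps v x < rho_upper eps kap (layer_up eps ((\<lambda>x. A * growth g x) 0)) (\<lambda>x. A * growth g x) x
      \<and> V_shoot eps v x < V_upper eps kap (layer_up eps ((\<lambda>x. A * growth g x) 0)) (growth g) x"
  proof (rule rho_shoot_below_upper_barrier[OF eps g(1) growth_has_derivative growth_A_has_derivative])
    fix x :: real assume x: "x \<in> {0..1}"
    show "\<bar>A * growth g x\<bar> \<le> D0 \<and> \<bar>growth g x\<bar> \<le> gmax * exp Lg \<and> \<bar>A * (Lg * growth g x)\<bar> \<le> A * Lg * gmax * exp Lg"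
      by (rule growing_barrier_bounds[OF g x])
    show "c * (A * growth g x) \<le> Lg * (growth g x)" by (simp add: Lg_def)
    have ge: "g \<le> growth g x" using exp_Lg_bounds[OF x] g by simp
    have "(2 * rb x - 1) * (A * growth g x) \<ge> 2 * (growth g x)"
      using two_le_gap_A[OF x] g by (simp add: mult.assoc[symmetric])
    then show "growth g x - (2 * rb x - 1) * (A * growth g x) \<le> - g" using ge by linarith
  next
    show "eps + c * Lmax * eps / kap \<le> g / 2" using eps_smallD(6,7)[OF ok] g by linarith
    show "eps * Mb < g" using eps_smallD(6,7)[OF ok] g by linarith
    show "v < Vb 0 + growth g 0" using v by simp
  qed
  then show ?thesis by simp
qed

lemma rho_shoot_above_growing_barrier:
  assumes g: "0 < g" "g \<le> gmax" and ok: "eps_small g eps" and v: "v > Vb 0 - g"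
  shows "\<forall>x\<in>{0..1}. rho_lower eps kap (layer_lo eps (A * g)) (\<lambda>x. A * growth g x) x < rho_shoot eps v x
      \<and> V_lower eps kap (layer_lo eps (A * g)) (growth g) x < V_shoot eps v x"
proof -
  have eps: "0 < eps" "eps \<le> 1" "eps \<le> margin / 4" "eps \<le> m0 / 2" "Lmax * eps / (kap * x1) \<le> m0 / 4"
    using eps_smallD[OF ok] by auto
  have g2: "0 < g / 2" using g by simp
  have "\<forall>x\<in>{0..1}. rho_lower eps kap (layer_lo eps ((\<lambda>x. A * growth g x) 0)) (\<lambda>x. A * growth g x) x < rho_shoot eps v x
      \<and> V_lower eps kap (layer_lo eps ((\<lambda>x. A * growth g x) 0)) (growth g) x < V_shoot eps v x"
  proof (rule rho_shoot_above_lower_barrier[OF eps g2 growth_has_derivative growth_A_has_derivative])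
    fix x :: real assume x: "x \<in> {0..1}"
    show "\<bar>A * growth g x\<bar> \<le> D0 \<and> \<bar>growth g x\<bar> \<le> gmax * exp Lg \<and> \<bar>A * (Lg * growth g x)\<bar> \<le> A * Lg * gmax * exp Lg"
      by (rule growing_barrier_bounds[OF g x])
    show "c * (A * growth g x) \<le> Lg * (growth g x)" by (simp add: Lg_def)
    define gm where "gm = growth g x"
    have ge: "g \<le> gm" using exp_Lg_bounds[OF x] g by (simp add: gm_def)
    have gm0: "gm > 0" using g by (simp add: gm_def)
    have t1: "(2 * rb x - 1) * (A * gm) \<ge> 2 * gm"
      using two_le_gap_A[OF x] gm0 by (simp add: mult.assoc[symmetric])
    have "A ^ 2 * gm \<le> A ^ 2 * (gmax * exp Lg)" using exp_Lg_bounds[OF x] g A_pos unfolding gm_def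
      by (intro mult_left_mono mult_mono) auto
    then have "A ^ 2 * gm \<le> 1 / 2" using gmax_le(2) by (simp add: mult.assoc)
    then have "(A * gm) ^ 2 \<le> gm / 2" using gm0
      by (simp add: power2_eq_square)
    then show "g / 2 \<le> (2 * rb x - 1) * (A * growth g x) - (A * growth g x)\<^sup>2 - growth g x"
      using t1 ge unfolding gm_def[symmetric] by linarith
  next
    show "eps + c * Lmax * eps / kap \<le> g / 2 / 2" using eps_smallD(6,7)[OF ok] g by linarith
    show "eps * Mb < g / 2" using eps_smallD(6,7)[OF ok] g by linarith
    show "Vb 0 - growth g 0 < v" using v by simp
  qed
  then show ?thesis by simp
qed

lemma constant_barrier_bounds:
  assumes g: "0 < g" "g \<le> gmax"
  shows "\<bar>B * g\<bar> \<le> D0" "g \<le> gmax * exp Lg" "(B * g) ^ 2 \<le> g / 4"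
proof -
  have "B * g \<le> B * gmax" using g B_pos by (intro mult_left_mono) auto
  then have "B * g \<le> D0" using gmax_le(3) by linarith
  then show "\<bar>B * g\<bar> \<le> D0" using g B_pos by simp
  have "gmax * 1 \<le> gmax * exp Lg" using gmax_pos Lg_pos by (intro mult_left_mono) auto
  then show "g \<le> gmax * exp Lg" using g by linarith
  have "B ^ 2 * g \<le> B ^ 2 * gmax" using g by (intro mult_left_mono) auto
  then have "B ^ 2 * g \<le> 1 / 4" using gmax_le(4) by linarith
  then show "(B * g) ^ 2 \<le> g / 4" using g by (simp add: power2_eq_square)
qed

lemma layer_at_end_less:
  assumes ok: "eps_small g eps" and l0: "0 \<le> l0" "l0 \<le> Lmax"
  shows "l0 * exp (- (kap / eps) * 1) < B * g"
proof -
  have "l0 * exp (- (kap / eps) * 1) \<le> Lmax * (eps / (kap * 1))"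
    using l0 exp_layer_le[of eps 1 1] eps_smallD(1)[OF ok] by (intro mult_mono) auto
  then show ?thesis using eps_smallD(8)[OF ok] by simp
qed

lemma rho_shoot_end_below:
  assumes g: "0 < g" "g \<le> gmax" and ok: "eps_small g eps" and v: "v < Vb 0 - g"
  shows "rho_shoot eps v 1 < rb 1"
proof -
  have eps: "0 < eps" "eps \<le> 1" using eps_smallD[OF ok] by auto
  note bounds = constant_barrier_bounds[OF g]
  have "\<forall>x\<in>{0..1}. rho_shoot eps v x < rho_upper eps kap (layer_up eps ((\<lambda>x. - (B * g)) 0)) (\<lambda>x. - (B * g)) x
      \<and> V_shoot eps v x < V_upper eps kap (layer_up eps ((\<lambda>x. - (B * g)) 0)) (\<lambda>x. - g) x"
  proof (rule rho_shoot_below_upper_barrier[where mu="g / 2", OF eps _ DERIV_const DERIV_const])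
    fix x :: real assume x: "x \<in> {0..1}"
    show "\<bar>- (B * g)\<bar> \<le> D0 \<and> \<bar>- g\<bar> \<le> gmax * exp Lg \<and> \<bar>0\<bar> \<le> A * Lg * gmax * exp Lg"
      using bounds g A_pos Lg_pos gmax_pos by auto
    show "c * - (B * g) \<le> 0" using c_pos B_pos g by simp
    have "(2 * rb x - 1) * (B * g) \<le> g / 2" using gap_B_le_half[OF x] g
      by (simp add: mult.assoc[symmetric])
    then show "- g - (2 * rb x - 1) * - (B * g) \<le> - (g / 2)" by simp
  next
    show "eps + c * Lmax * eps / kap \<le> g / 2 / 2" using eps_smallD(6,9)[OF ok] g by linarith
    show "eps * Mb < g / 2" using eps_smallD(7)[OF ok] g by linarith
    show "v < Vb 0 + - g" using v by simp
  qed (use g in simp)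
  then have "rho_shoot eps v 1 < rho_upper eps kap (layer_up eps (- (B * g))) (\<lambda>x. - (B * g)) 1" by auto
  moreover have "layer_up eps (- (B * g)) * exp (- (kap / eps) * 1) < B * g"
    using layer_up_bounds[OF eps] bounds(1) by (intro layer_at_end_less[OF ok]) auto
  ultimately show ?thesis by (simp add: rho_upper_def)
qed

lemma rho_shoot_end_above:
  assumes g: "0 < g" "g \<le> gmax" and ok: "eps_small g eps" and v: "v > Vb 0 + g"
  shows "rho_shoot eps v 1 > rb 1"
proof -
  have eps: "0 < eps" "eps \<le> 1" "eps \<le> margin / 4" "eps \<le> m0 / 2" "Lmax * eps / (kap * x1) \<le> m0 / 4"
    using eps_smallD[OF ok] by auto
  note bounds = constant_barrier_bounds[OF g]
  have "\<forall>x\<in>{0..1}. rho_lower eps kap (layer_lo eps ((\<lambda>x. - (B * g)) 0)) (\<lambda>x. - (B * g)) x < rho_shoot eps v x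
      \<and> V_lower eps kap (layer_lo eps ((\<lambda>x. - (B * g)) 0)) (\<lambda>x. - g) x < V_shoot eps v x"
  proof (rule rho_shoot_above_lower_barrier[where mu="g / 4", OF eps _ DERIV_const DERIV_const])
    fix x :: real assume x: "x \<in> {0..1}"
    show "\<bar>- (B * g)\<bar> \<le> D0 \<and> \<bar>- g\<bar> \<le> gmax * exp Lg \<and> \<bar>0\<bar> \<le> A * Lg * gmax * exp Lg"
      using bounds g A_pos Lg_pos gmax_pos by auto
    show "c * - (B * g) \<le> 0" using c_pos B_pos g by simp
    have "(2 * rb x - 1) * (B * g) \<le> g / 2" using gap_B_le_half[OF x] g
      by (simp add: mult.assoc[symmetric])
    then show "g / 4 \<le> (2 * rb x - 1) * - (B * g) - (- (B * g))\<^sup>2 - - g" using bounds(3) by simp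
  next
    show "eps + c * Lmax * eps / kap \<le> g / 4 / 2" using eps_smallD(6)[OF ok] by linarith
    show "eps * Mb < g / 4" using eps_smallD(7)[OF ok] by linarith
    show "Vb 0 - - g < v" using v by simp
  qed (use g in simp)
  then have "rho_lower eps kap (layer_lo eps (- (B * g))) (\<lambda>x. - (B * g)) 1 < rho_shoot eps v 1" by auto
  moreover have "layer_lo eps (- (B * g)) * exp (- (kap / eps) * 1) < B * g"
    using layer_lo_bounds[OF eps(1,2)] bounds(1) by (intro layer_at_end_less[OF ok]) auto
  ultimately show ?thesis by (simp add: rho_lower_def)
qed

lemma shoot_target_near:
  assumes g: "0 < g" "g \<le> gmax" and ok: "eps_small g eps" and hit: "rho_shoot eps v 1 = rb 1"
  shows "\<bar>v - Vb 0\<bar> \<le> g"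
  using rho_shoot_end_below[OF g ok, of v] rho_shoot_end_above[OF g ok, of v] hit by linarith

lemma shoot_target_exists:
  assumes ok: "eps_small (gmax / 4) eps"
  shows "\<exists>v. \<bar>v - Vb 0\<bar> \<le> gmax / 2 \<and> rho_shoot eps v 1 = rb 1"
proof -
  have g: "0 < gmax / 4" "gmax / 4 \<le> gmax" using gmax_pos by auto
  have "rho_shoot eps (Vb 0 - gmax / 2) 1 \<le> rb 1"
    using rho_shoot_end_below[OF g ok] gmax_pos by (simp add: less_imp_le)
  moreover have "rb 1 \<le> rho_shoot eps (Vb 0 + gmax / 2) 1"
    using rho_shoot_end_above[OF g ok] gmax_pos by (simp add: less_imp_le)
  moreover have "Vb 0 - gmax / 2 \<le> Vb 0 + gmax / 2" using gmax_pos by simp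
  moreover have "continuous_on {Vb 0 - gmax / 2..Vb 0 + gmax / 2} (\<lambda>v. rho_shoot eps v 1)"
    by (rule continuous_rho_shoot_end[OF eps_smallD(1)[OF ok]])
  ultimately obtain v where "Vb 0 - gmax / 2 \<le> v" "v \<le> Vb 0 + gmax / 2" "rho_shoot eps v 1 = rb 1"
    using IVT'[of "\<lambda>v. rho_shoot eps v 1" "Vb 0 - gmax / 2" "rb 1" "Vb 0 + gmax / 2"] by blast
  then show ?thesis by (intro exI[of _ v] conjI abs_leI) auto
qed

definition "shoot eps = (SOME v. \<bar>v - Vb 0\<bar> \<le> gmax / 2 \<and> rho_shoot eps v 1 = rb 1)"

lemma shoot_hits_target:
  assumes "eps_small (gmax / 4) eps"
  shows "\<bar>shoot eps - Vb 0\<bar> \<le> gmax / 2" "rho_shoot eps (shoot eps) 1 = rb 1"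
  using someI_ex[OF shoot_target_exists[OF assms]] by (simp_all add: shoot_def)

lemma shoot_between_barriers:
  assumes eta: "0 < eta" "eta \<le> gmax / 4" and ok: "eps_small eta eps"
  shows "\<forall>x\<in>{0..1}. rho_lower eps kap (layer_lo eps (A * (2 * eta))) (\<lambda>x. A * growth (2 * eta) x) x
      < rho_shoot eps (shoot eps) x
      \<and> rho_shoot eps (shoot eps) x < rho_upper eps kap (layer_up eps (A * (2 * eta))) (\<lambda>x. A * growth (2 * eta) x) x"
    and "\<forall>x\<in>{0..1}. \<bar>rho_shoot eps (shoot eps) x\<bar> \<le> B0 \<and> \<bar>V_shoot eps (shoot eps) x\<bar> \<le> B0"
proof -
  have eps: "0 < eps" "eps \<le> 1" using eps_smallD[OF ok] by auto
  have g: "0 < 2 * eta" "2 * eta \<le> gmax" using eta by auto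
  have ok2: "eps_small (2 * eta) eps" by (rule eps_small_mono[OF ok]) (use eta in simp)
  have "\<bar>shoot eps - Vb 0\<bar> \<le> eta"
    using shoot_target_near[OF eta(1) _ ok shoot_hits_target(2)] eps_small_mono[OF ok eta(2)] eta gmax_pos
    by auto
  then have v: "shoot eps < Vb 0 + 2 * eta" "shoot eps > Vb 0 - 2 * eta" using eta by auto
  note U = rho_shoot_below_growing_barrier[OF g ok2 v(1)]
    and L = rho_shoot_above_growing_barrier[OF g ok2 v(2)]
  then show "\<forall>x\<in>{0..1}. rho_lower eps kap (layer_lo eps (A * (2 * eta))) (\<lambda>x. A * growth (2 * eta) x) x
      < rho_shoot eps (shoot eps) x
      \<and> rho_shoot eps (shoot eps) x < rho_upper eps kap (layer_up eps (A * (2 * eta))) (\<lambda>x. A * growth (2 * eta) x) x"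
    by auto
  have A0: "\<bar>A * (2 * eta)\<bar> \<le> D0" using growing_barrier_bounds[OF g, of 0] by simp
  show "\<forall>x\<in>{0..1}. \<bar>rho_shoot eps (shoot eps) x\<bar> \<le> B0 \<and> \<bar>V_shoot eps (shoot eps) x\<bar> \<le> B0"
  proof
    fix x :: real assume x: "x \<in> {0..1}"
    note b = growing_barrier_bounds[OF g x]
    have lu: "0 \<le> layer_up eps (A * (2 * eta))" "layer_up eps (A * (2 * eta)) \<le> Lmax"
      and ll: "0 \<le> layer_lo eps (A * (2 * eta))" "layer_lo eps (A * (2 * eta)) \<le> Lmax"
      using layer_up_bounds[OF eps A0] layer_lo_bounds[OF eps A0] by auto
    have "\<bar>rho_upper eps kap (layer_up eps (A * (2 * eta))) (\<lambda>x. A * growth (2 * eta) x) x\<bar> \<le> B0"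
      "\<bar>rho_lower eps kap (layer_lo eps (A * (2 * eta))) (\<lambda>x. A * growth (2 * eta) x) x\<bar> \<le> B0"
      "\<bar>V_upper eps kap (layer_up eps (A * (2 * eta))) (growth (2 * eta)) x\<bar> \<le> B0"
      "\<bar>V_lower eps kap (layer_lo eps (A * (2 * eta))) (growth (2 * eta)) x\<bar> \<le> B0"
      using abs_rho_barriers_le(1)[OF eps x _ lu] abs_rho_barriers_le(2)[OF eps x _ ll]
        abs_V_barriers_le(1)[OF eps x _ lu] abs_V_barriers_le(2)[OF eps x _ ll] b
      by (auto simp: mult.assoc)
    then show "\<bar>rho_shoot eps (shoot eps) x\<bar> \<le> B0 \<and> \<bar>V_shoot eps (shoot eps) x\<bar> \<le> B0"
      using U[rule_format, OF x] L[rule_format, OF x] by (simp add: mult.assoc abs_le_iff)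
  qed
qed

lemma weak_sol_shoot:
  assumes cc: "OmA + OmD = c" "OmA = c * rK" and beta: "rb 1 = 1 - beta"
    and ok: "eps_small (gmax / 4) eps"
  shows "weak_sol eps OmA OmD alpha beta (rho_shoot eps (shoot eps))"
proof -
  have eps: "0 < eps" using eps_smallD(1)[OF ok] .
  note box = shoot_between_barriers(2)[OF _ order_refl ok] gmax_pos
  show ?thesis
  proof (rule weak_sol_of_classical[OF eps continuous_on_rho_shoot[OF eps] continuous_on_V_shoot[OF eps]])
    fix x :: real assume x: "x \<in> {0..1}"
    have "clip B0 (rho_shoot eps (shoot eps) x) = rho_shoot eps (shoot eps) x"
      "clip B0 (V_shoot eps (shoot eps) x) = V_shoot eps (shoot eps) x"
      using box x by (auto intro: clip_eq_self)
    then show "(rho_shoot eps (shoot eps) has_real_derivative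
          2 / eps * (V_shoot eps (shoot eps) x + rho_shoot eps (shoot eps) x - (rho_shoot eps (shoot eps) x)\<^sup>2))
        (at x within {0..1})"
      "(V_shoot eps (shoot eps) has_real_derivative (OmA + OmD) * rho_shoot eps (shoot eps) x - OmA)
        (at x within {0..1})"
      using rho_shoot_has_derivative[OF eps x, of "shoot eps"] V_shoot_has_derivative[OF eps x, of "shoot eps"] cc
      by (simp_all add: rho_slope_def right_diff_distrib)
  next
    show "rho_shoot eps (shoot eps) 0 = alpha" by (rule rho_shoot_0[OF eps])
    show "rho_shoot eps (shoot eps) 1 = 1 - beta" using shoot_hits_target(2)[OF ok] beta by simp
  qed
qed

lemma layer_up_le: "0 \<le> d0 \<Longrightarrow> layer_up eps d0 \<le> max 0 (alpha - rb 0) + eps"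
  by (auto simp: layer_up_def)

lemma layer_lo_le: "0 \<le> d0 \<Longrightarrow> layer_lo eps d0 \<le> max 0 (rb 0 - alpha) + eps"
  by (auto simp: layer_lo_def)

definition "layer_width Dl = Dl / (4 * (M1 + 1))"

context
  fixes Dl eta eps :: real
  assumes D: "Dl > 0" and eta: "0 < eta" "eta \<le> gmax / 4" and eta_Dl: "A * (2 * eta) * exp Lg \<le> Dl / 4"
    and ok: "eps_small eta eps" and eps_Dl: "eps < Dl / 4"
    and layer_Dl: "Lmax / (kap * layer_width Dl) * eps < Dl / 4"
begin

lemma shoot_barrier_estimate:
  assumes x: "x \<in> {0..1}"
  shows "rb x - Dl / 4 - layer_lo eps (A * (2 * eta)) * exp (- (kap / eps) * x) < rho_shoot eps (shoot eps) x"
    and "rho_shoot eps (shoot eps) x < rb x + Dl / 4 + layer_up eps (A * (2 * eta)) * exp (- (kap / eps) * x)"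
proof -
  have "A * (2 * eta) * exp (Lg * x) \<le> A * (2 * eta) * exp Lg"
    using exp_Lg_bounds[OF x] A_pos eta by (intro mult_left_mono) auto
  then have "A * (2 * eta) * exp (Lg * x) \<le> Dl / 4" using eta_Dl by linarith
  then have "A * growth (2 * eta) x \<le> Dl / 4" by (simp add: mult.assoc)
  then show "rb x - Dl / 4 - layer_lo eps (A * (2 * eta)) * exp (- (kap / eps) * x) < rho_shoot eps (shoot eps) x"
    and "rho_shoot eps (shoot eps) x < rb x + Dl / 4 + layer_up eps (A * (2 * eta)) * exp (- (kap / eps) * x)"
    using shoot_between_barriers(1)[OF eta ok, rule_format, OF x] by (auto simp: rho_upper_def rho_lower_def)
qed

lemma shoot_near_outside_layer:
  assumes x: "x \<in> {0..1}" "layer_width Dl < x"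
  shows "\<bar>rho_shoot eps (shoot eps) x - rb x\<bar> < Dl"
proof -
  have eps: "0 < eps" "eps \<le> 1" using eps_smallD[OF ok] by auto
  have w: "layer_width Dl > 0" using D M1_nonneg by (simp add: layer_width_def)
  have A0: "\<bar>A * (2 * eta)\<bar> \<le> D0" using growing_barrier_bounds[of "2 * eta" 0] eta by simp
  have E: "exp (- (kap / eps) * x) \<le> eps / (kap * layer_width Dl)"
    using eps w x by (intro exp_layer_le) auto
  have small: "l * exp (- (kap / eps) * x) < Dl / 4" if "0 \<le> l" "l \<le> Lmax" for l
  proof -
    have "l * exp (- (kap / eps) * x) \<le> Lmax * (eps / (kap * layer_width Dl))"
      using that E by (intro mult_mono) auto
    also have "\<dots> = Lmax / (kap * layer_width Dl) * eps" by simp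
    finally show ?thesis using layer_Dl by linarith
  qed
  have "layer_up eps (A * (2 * eta)) * exp (- (kap / eps) * x) < Dl / 4"
    "layer_lo eps (A * (2 * eta)) * exp (- (kap / eps) * x) < Dl / 4"
    using small layer_up_bounds[OF eps A0] layer_lo_bounds[OF eps A0] by auto
  then show ?thesis using shoot_barrier_estimate[OF x(1)] unfolding abs_less_iff by linarith
qed

lemma shoot_near_in_layer:
  assumes x: "x \<in> {0..1}" "x \<le> layer_width Dl"
  shows "min alpha (rb x) - Dl < rho_shoot eps (shoot eps) x"
    and "rho_shoot eps (shoot eps) x < max alpha (rb x) + Dl"
proof -
  have eps: "0 < eps" using eps_smallD[OF ok] by auto
  have "\<bar>rb x - rb 0\<bar> \<le> M1 * layer_width Dl"
    using rb_dist_0_le[OF x(1)] mult_left_mono[OF x(2) M1_nonneg] by linarith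
  also have "\<dots> \<le> Dl / 4" using D M1_nonneg by (simp add: layer_width_def field_simps)
  finally have rb0: "\<bar>rb x - rb 0\<bar> \<le> Dl / 4" .
  have A: "0 \<le> A * (2 * eta)" using A_pos eta by simp
  have E: "0 < exp (- (kap / eps) * x)" "exp (- (kap / eps) * x) \<le> 1" using x kap_pos eps by auto
  have lu: "layer_up eps (A * (2 * eta)) * exp (- (kap / eps) * x) \<le> max 0 (alpha - rb 0) + eps"
    and ll: "layer_lo eps (A * (2 * eta)) * exp (- (kap / eps) * x) \<le> max 0 (rb 0 - alpha) + eps"
    using layer_up_le[OF A, of eps] layer_lo_le[OF A, of eps] E eps
    by (auto intro!: order_trans[OF mult_right_le_one_le] simp: layer_up_def layer_lo_def)
  have rb0': "rb x - rb 0 \<le> Dl / 4" "rb 0 - rb x \<le> Dl / 4" using abs_le_D1[OF rb0] abs_le_D2[OF rb0] by simp_all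
  have mx: "alpha \<le> max alpha (rb x)" "rb x \<le> max alpha (rb x)" "min alpha (rb x) \<le> alpha" "min alpha (rb x) \<le> rb x"
    by auto
  note est = shoot_barrier_estimate[OF x(1)]
  show "min alpha (rb x) - Dl < rho_shoot eps (shoot eps) x"
  proof (cases "rb 0 \<le> alpha")
    case True
    then have "max 0 (rb 0 - alpha) = 0" by simp
    then show ?thesis using ll est(1) mx rb0' eps_Dl D by linarith
  next
    case False
    then have "max 0 (rb 0 - alpha) = rb 0 - alpha" by simp
    then show ?thesis using ll est(1) mx rb0' eps_Dl D by linarith
  qed
  show "rho_shoot eps (shoot eps) x < max alpha (rb x) + Dl"
  proof (cases "alpha \<le> rb 0")
    case True
    then have "max 0 (alpha - rb 0) = 0" by simp
    then show ?thesis using lu est(2) mx rb0' eps_Dl D by linarith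
  next
    case False
    then have "max 0 (alpha - rb 0) = alpha - rb 0" by simp
    then show ?thesis using lu est(2) mx rb0' eps_Dl D by linarith
  qed
qed

lemma shoot_in_nbhd: "rho_shoot eps (shoot eps) \<in> nbhd (\<lambda>x. if x = 0 then alpha else rb x) Dl"
proof (rule nbhd_memI)
  have bound: "- (\<bar>alpha\<bar> + Rb) \<le> (if y = 0 then alpha else rb y) \<and> (if y = 0 then alpha else rb y) \<le> \<bar>alpha\<bar> + Rb"
    if "y \<in> {0..1}" for y
    using abs_rb_le[OF that] Rb_nonneg by (auto simp: abs_le_iff)
  show "bdd_above ((\<lambda>x. if x = 0 then alpha else rb x) ` {0..1})"
    by (rule bdd_aboveI2) (use bound in blast)
  show "bdd_below ((\<lambda>x. if x = 0 then alpha else rb x) ` {0..1})"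
    by (rule bdd_belowI2) (use bound in blast)
  fix x :: real assume x: "x \<in> {0..1}"
  have eps: "0 < eps" using eps_smallD[OF ok] by auto
  have w: "0 < layer_width Dl" "layer_width Dl \<le> Dl" using D M1_nonneg by (simp_all add: layer_width_def field_simps)
  consider "x = 0" | "0 < x" "x \<le> layer_width Dl" | "layer_width Dl < x" using x by force
  then show "\<exists>y1 y2. y1 \<in> {0..1} \<and> y2 \<in> {0..1} \<and> \<bar>y1 - x\<bar> \<le> Dl \<and> \<bar>y2 - x\<bar> \<le> Dl
      \<and> (if y1 = 0 then alpha else rb y1) - Dl < rho_shoot eps (shoot eps) x
      \<and> rho_shoot eps (shoot eps) x < (if y2 = 0 then alpha else rb y2) + Dl"
  proof cases
    case 1
    then show ?thesis using rho_shoot_0[OF eps] D by (intro exI[of _ 0]) auto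
  next
    case 2
    note near = shoot_near_in_layer[OF x 2(2)]
    have "\<bar>0 - x\<bar> \<le> Dl" "\<bar>x - x\<bar> \<le> Dl" using 2 w D by auto
    then show ?thesis
      using near x 2(1) by (cases "alpha \<le> rb x"; intro exI[of _ 0] exI[of _ x]; auto simp: min_def max_def)
  next
    case 3
    then have "x \<noteq> 0" using w by auto
    then show ?thesis
      using shoot_near_outside_layer[OF x 3] x D by (intro exI[of _ x]) (auto simp: abs_less_iff)
  qed
qed

end

lemma eventually_shoot_in_nbhd:
  assumes D: "Dl > 0"
  shows "\<forall>\<^sub>F eps in at_right 0. rho_shoot eps (shoot eps) \<in> nbhd (\<lambda>x. if x = 0 then alpha else rb x) Dl"
proof -
  define eta where "eta = min (gmax / 4) (Dl / (8 * A * exp Lg))"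
  have eta: "0 < eta" "eta \<le> gmax / 4" using gmax_pos D A_pos by (auto simp: eta_def)
  have "eta \<le> Dl / (8 * A * exp Lg)" by (simp add: eta_def)
  then have "eta * (8 * A * exp Lg) \<le> Dl" using A_pos by (simp add: pos_le_divide_eq)
  then have eta_Dl: "A * (2 * eta) * exp Lg \<le> Dl / 4" by (simp add: algebra_simps)
  have "\<forall>\<^sub>F eps in at_right 0. eps_small eta eps" by (rule eventually_eps_small[OF eta(1)])
  moreover have "\<forall>\<^sub>F eps in at_right 0. 1 * eps < Dl / 4"
    and "\<forall>\<^sub>F eps in at_right 0. Lmax / (kap * layer_width Dl) * eps < Dl / 4"
    using D by (intro eventually_mult_less_at_right_0, simp)+
  ultimately show ?thesis
  proof eventually_elim
    case (elim eps)
    then show ?case by (intro shoot_in_nbhd[OF D eta eta_Dl]) simp_all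
  qed
qed

lemma shooting_solution_limit:
  assumes cc: "OmA + OmD = c" "OmA = c * rK" and beta: "rb 1 = 1 - beta"
  shows "\<exists>eps1>0. \<exists>rhos :: real \<Rightarrow> real \<Rightarrow> real.
           (\<forall>eps. 0 < eps \<and> eps < eps1 \<longrightarrow> weak_sol eps OmA OmD alpha beta (rhos eps)) \<and>
           eps_lim rhos (\<lambda>x. if x = 0 then alpha else rb x)"
proof -
  obtain eps1 where eps1: "eps1 > 0" "\<And>eps. 0 < eps \<Longrightarrow> eps < eps1 \<Longrightarrow> eps_small (gmax / 4) eps"
    using eventually_eps_small[of "gmax / 4"] gmax_pos unfolding eventually_at_right_field by auto
  show ?thesis
  proof (intro exI[of _ eps1] exI[of _ "\<lambda>eps. rho_shoot eps (shoot eps)"] conjI allI impI)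
    show "eps_lim (\<lambda>eps. rho_shoot eps (shoot eps)) (\<lambda>x. if x = 0 then alpha else rb x)"
      by (rule eps_lim_of_eventually[OF eventually_shoot_in_nbhd])
    fix eps assume "0 < eps \<and> eps < eps1"
    then show "weak_sol eps OmA OmD alpha beta (rho_shoot eps (shoot eps))"
      using weak_sol_shoot[OF cc beta eps1(2)] by simp
  qed (rule eps1(1))
qed

end

lemma above_half_of_never_half:
  fixes rhob :: "real \<Rightarrow> real"
  assumes cont: "continuous_on {0..1} rhob" and ne: "\<forall>x\<in>{0..1}. rhob x \<noteq> 1/2"
    and end1: "rhob 1 > 1/2" and x: "x \<in> {0..1}"
  shows "rhob x > 1/2"
proof (rule ccontr)
  assume "\<not> rhob x > 1/2"
  moreover have "continuous_on {x..1} rhob" using cont by (rule continuous_on_subset) (use x in auto)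
  ultimately obtain y where "x \<le> y" "y \<le> 1" "rhob y = 1/2"
    using IVT'[of rhob x "1/2" 1] x end1 by auto
  then show False using ne x by auto
qed

theorem mainTheorem19:
  fixes OmD K OmA alpha beta :: real and rhob :: "real \<Rightarrow> real"
  assumes "OmD > 0" and "K > 1" and "OmA = K * OmD"
    and "1/2 < 1 - beta" and "1 - beta \<noteq> K / (K + 1)"
    and rhob_ne: "\<forall>x\<in>{0..1}. rhob x \<noteq> 1/2"
    and rhob_ode: "\<forall>x\<in>{0..1}. (rhob has_real_derivative
          ((K + 1) * OmD * (rhob x - K / (K + 1)) / (2 * (rhob x - 1/2)))) (at x within {0..1})"
    and rhob_end: "rhob 1 = 1 - beta"
    and "alpha > 1 - rhob 0" and "alpha \<noteq> 1 - (1 - rhob 0)"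
  shows "\<exists>eps1>0. \<exists>rhos :: real \<Rightarrow> real \<Rightarrow> real.
           (\<forall>eps. 0 < eps \<and> eps < eps1 \<longrightarrow> weak_sol eps OmA OmD alpha beta (rhos eps)) \<and>
           eps_lim rhos (\<lambda>x. if x = 0 then alpha else rhob x)"
proof -
  define c where "c = (K + 1) * OmD"
  define rK where "rK = K / (K + 1)"
  have "continuous_on {0..1} rhob"
    by (rule DERIV_continuous_on[where D="\<lambda>x. (K + 1) * OmD * (rhob x - K / (K + 1)) / (2 * (rhob x - 1/2))"])
      (use rhob_ode in blast)
  then have "rhob x > 1/2" if "x \<in> {0..1}" for x
    using above_half_of_never_half[OF _ rhob_ne _ that] rhob_end assms(4) by simp
  moreover have "c > 0" using assms(1,2) by (simp add: c_def)
  ultimately interpret outer_solution c rK rhob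
    using rhob_ode by unfold_locales (simp_all add: c_def rK_def)
  obtain m0 Mr M1 where "m0 > 0" "M1 \<ge> 0"
    "\<And>x. x \<in> {0..1} \<Longrightarrow> m0 \<le> 2 * rhob x - 1 \<and> 2 * rhob x - 1 \<le> Mr \<and> \<bar>drb x\<bar> \<le> M1"
    by (metis outer_solution_bounds)
  then interpret shooting c rK rhob alpha m0 Mr M1
    using assms(9) by unfold_locales simp_all
  have "OmA + OmD = c" "OmA = c * rK" using assms(2,3) by (auto simp: c_def rK_def field_simps)
  then show ?thesis by (rule shooting_solution_limit[OF _ _ rhob_end])
qed

end
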